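(* Let $p=1/2$. There exist sets $\mathcal{X}_t\subset\mathcal{U}_0$, $t>0$, such that (i) $\mathbb{P}(X_t\in\mathcal{X}_t)\to1$ as $t\to\infty$, and (ii) $\lim_{t\to\infty}\frac{\log|\mathcal{X}_t|}{\sqrt t}=\frac{\pi}{\sqrt3}$.
   Context: The simple exclusion process on $\mathbb{Z}$ with parameter $p\in(0,1)$: each site is occupied by at most one particle; each particle attempts to jump one site to the right at rate $p$ and one site to the left at rate $1-p$, an attempt succeeding iff the target site is empty. $O$ is the configuration with every negative site occupied and every non-negative site empty; $\mathcal{U}_0$ is the set of configurations in which the number of particles in $[0,\infty)$ is finite and equal to the number of holes in $(-\infty,0)$. $\mathbb{P}$ is the law of the process started from $O$, $X_t$ the state at time $t$. *)

theory Defs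
  imports "HOL-Analysis.Analysis"
begin

(* A configuration: eta x = True iff site x is occupied. *)
type_synonym config = "int \<Rightarrow> bool"

definition Ostep :: config where
  "Ostep = (\<lambda>x. x < 0)"

definition U0 :: "config set" where
  "U0 = {\<eta>. finite {x. 0 \<le> x \<and> \<eta> x} \<and> finite {x. x < 0 \<and> \<not> \<eta> x} \<and>
             card {x. 0 \<le> x \<and> \<eta> x} = card {x. x < 0 \<and> \<not> \<eta> x}}"

definition swp :: "config \<Rightarrow> int \<Rightarrow> config" where
  "swp \<eta> x = \<eta>(x := \<eta> (x+1), x+1 := \<eta> x)"

definition rate :: "real \<Rightarrow> config \<Rightarrow> config \<Rightarrow> real" where
  "rate p \<eta> \<zeta> =
     (if \<exists>x. \<eta> x \<and> \<not> \<eta> (x+1) \<and> \<zeta> = swp \<eta> x then p else 0) +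
     (if \<exists>x. \<not> \<eta> x \<and> \<eta> (x+1) \<and> \<zeta> = swp \<eta> x then 1 - p else 0)"

definition qtot :: "real \<Rightarrow> config \<Rightarrow> real" where
  "qtot p \<eta> = p * real (card {x. \<eta> x \<and> \<not> \<eta> (x+1)})
             + (1 - p) * real (card {x. \<not> \<eta> x \<and> \<eta> (x+1)})"

definition preds :: "config \<Rightarrow> config set" where
  "preds \<eta> = (\<lambda>x. swp \<eta> x) ` {x. \<eta> x \<noteq> \<eta> (x+1)}"

(* pn p n eta t = probability that, started from O, the process has made exactly
   n jumps by time t and is at eta (last-jump decomposition of the jump chain
   with exponential holding times). *)
fun pn :: "real \<Rightarrow> nat \<Rightarrow> config \<Rightarrow> real \<Rightarrow> real" where
  "pn p 0 \<eta> t = (if \<eta> = Ostep then exp (- qtot p Ostep * t) else 0)"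
| "pn p (Suc n) \<eta> t =
     integral {0..t} (\<lambda>s. (\<Sum>\<zeta>\<in>preds \<eta>. pn p n \<zeta> s * rate p \<zeta> \<eta>) * exp (- qtot p \<eta> * (t - s)))"

definition trans_prob :: "real \<Rightarrow> real \<Rightarrow> config \<Rightarrow> real" where
  "trans_prob p t \<eta> = (\<Sum>n. pn p n \<eta> t)"

definition prob_in :: "real \<Rightarrow> real \<Rightarrow> config set \<Rightarrow> real" where
  "prob_in p t A = (\<Sum>\<^sub>\<infinity>\<eta>\<in>A. trans_prob p t \<eta>)"

end

theory Submission
  imports Defs "HOL-Real_Asymp.Real_Asymp"
begin

text \<open>
  A configuration in U0 is described by its particles in [0,oo) and its holes in (-oo,0).
  Its area A (sum of the particle positions plus the sum of the absolute hole positions)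
  measures the distance from O, and every jump changes A by +1 or -1.  The generator L of
  the process satisfies L A = 1/2 and L (A - c)^2 = A - c + q, where q is the total jump
  rate, and q <= 2 sqrt A + 1.  Splitting the law of X_t according to the number of jumps
  made so far (the functions pn), the forward equation for the truncated expectations shows
  that no mass escapes to infinitely many jumps, that E A(X_t) <= t/2 and that the second
  moment of A(X_t) - t/2 is O(t^(3/2)); by Chebyshev, A(X_t) <= t/2 + t^(4/5) with
  probability tending to 1.  On the counting side, configurations of area <= M inject into
  pairs of sets of naturals of total sum <= M, and a generating-function (saddle point)
  estimate gives log #{A <= M} <= pi sqrt (2M/3) + log 2, i.e. about pi sqrt (t/3) for
  M = t/2 + t^(4/5).  The sets X_t = {A <= t/2 + t^(4/5)}, padded with
  ceil (exp (pi sqrt (t/3))) further elements of U0 (padding cannot decrease the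
  probability and supplies the matching lower bound on the size), satisfy both limits.
\<close>

section \<open>Configurations and their area\<close>

definition occ_right :: "config \<Rightarrow> int set" where
  "occ_right \<eta> = {x. 0 \<le> x \<and> \<eta> x}"

definition holes_left :: "config \<Rightarrow> int set" where
  "holes_left \<eta> = {x. x < 0 \<and> \<not> \<eta> x}"

definition bonds :: "config \<Rightarrow> int set" where
  "bonds \<eta> = {x. \<eta> x \<noteq> \<eta> (x+1)}"

text \<open>The area between the height profile of a configuration and that of O.\<close>
definition area :: "config \<Rightarrow> int" where
  "area \<eta> = (\<Sum>y\<in>occ_right \<eta>. y) + (\<Sum>z\<in>holes_left \<eta>. - z)"

text \<open>Sign of the area change caused by a jump across the bond (x, x+1).\<close>
definition bond_sign :: "config \<Rightarrow> int \<Rightarrow> int" where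
  "bond_sign \<eta> x = (if \<eta> x then 1 else 0) - (if \<eta> (x+1) then 1 else 0)"

lemma U0_iff:
  "\<eta> \<in> U0 \<longleftrightarrow> finite (occ_right \<eta>) \<and> finite (holes_left \<eta>) \<and>
              card (occ_right \<eta>) = card (holes_left \<eta>)"
  by (simp add: U0_def occ_right_def holes_left_def)

lemma swp_apply: "swp \<eta> x y = (if y = x then \<eta> (x+1) else if y = x+1 then \<eta> x else \<eta> y)"
  by (simp add: swp_def)

lemma swp_swp: "swp (swp \<eta> x) x = \<eta>"
  by (rule ext) (simp add: swp_apply)

lemma bonds_swp: "x \<in> bonds \<eta> \<Longrightarrow> x \<in> bonds (swp \<eta> x)"
  by (auto simp: bonds_def swp_apply)

lemma swp_inj:
  assumes "x \<in> bonds \<eta>" "swp \<eta> y = swp \<eta> x"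
  shows "y = x"
proof -
  have "swp \<eta> y x \<noteq> \<eta> x" "swp \<eta> y (x+1) \<noteq> \<eta> (x+1)"
    using assms by (auto simp: swp_apply bonds_def)
  then show ?thesis by (auto simp: swp_apply split: if_splits)
qed

lemma occ_right_swp: "occ_right (swp \<eta> x) \<subseteq> occ_right \<eta> \<union> {x, x+1}"
  by (auto simp: occ_right_def swp_apply split: if_splits)

lemma holes_left_swp: "holes_left (swp \<eta> x) \<subseteq> holes_left \<eta> \<union> {x, x+1}"
  by (auto simp: holes_left_def swp_apply split: if_splits)

lemma window_sum:
  fixes \<phi> :: "int \<Rightarrow> bool \<Rightarrow> 'b::comm_monoid_add"
  assumes "finite W" "finite W'"
    and "occ_right \<eta> \<union> holes_left \<eta> \<subseteq> W" "occ_right \<eta> \<union> holes_left \<eta> \<subseteq> W'"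
    and "\<And>x. 0 \<le> x \<Longrightarrow> \<phi> x False = 0" "\<And>x. x < 0 \<Longrightarrow> \<phi> x True = 0"
  shows "(\<Sum>x\<in>W. \<phi> x (\<eta> x)) = (\<Sum>x\<in>W'. \<phi> x (\<eta> x))"
proof -
  have zero: "\<phi> x (\<eta> x) = 0" if "x \<notin> occ_right \<eta> \<union> holes_left \<eta>" for x
    using that assms(5,6) by (cases "0 \<le> x") (auto simp: occ_right_def holes_left_def)
  have "(\<Sum>x\<in>W. \<phi> x (\<eta> x)) = (\<Sum>x\<in>occ_right \<eta> \<union> holes_left \<eta>. \<phi> x (\<eta> x))"
    using assms zero by (intro sum.mono_neutral_right) auto
  also have "\<dots> = (\<Sum>x\<in>W'. \<phi> x (\<eta> x))"
    using assms zero by (intro sum.mono_neutral_left) auto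
  finally show ?thesis .
qed

definition area_weight :: "int \<Rightarrow> bool \<Rightarrow> int" where
  "area_weight x b = (if 0 \<le> x then (if b then x else 0) else (if b then 0 else - x))"

definition balance_weight :: "int \<Rightarrow> bool \<Rightarrow> int" where
  "balance_weight x b = (if 0 \<le> x then (if b then 1 else 0) else (if b then 0 else - 1))"

lemma area_window:
  assumes "finite W" "occ_right \<eta> \<union> holes_left \<eta> \<subseteq> W"
    and "finite (occ_right \<eta>)" "finite (holes_left \<eta>)"
  shows "area \<eta> = (\<Sum>x\<in>W. area_weight x (\<eta> x))"
proof -
  have "(\<Sum>x\<in>W. area_weight x (\<eta> x)) =
        (\<Sum>x\<in>occ_right \<eta> \<union> holes_left \<eta>. area_weight x (\<eta> x))"
    by (rule window_sum) (use assms in \<open>auto simp: area_weight_def\<close>)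
  also have "\<dots> = (\<Sum>x\<in>occ_right \<eta>. area_weight x (\<eta> x)) +
                  (\<Sum>x\<in>holes_left \<eta>. area_weight x (\<eta> x))"
    using assms by (intro sum.union_disjoint) (auto simp: occ_right_def holes_left_def)
  also have "\<dots> = area \<eta>"
    unfolding area_def
    by (intro arg_cong2[where f="(+)"] sum.cong) (auto simp: area_weight_def occ_right_def holes_left_def)
  finally show ?thesis by simp
qed

lemma balance_window:
  assumes "finite W" "occ_right \<eta> \<union> holes_left \<eta> \<subseteq> W"
    and "finite (occ_right \<eta>)" "finite (holes_left \<eta>)"
  shows "int (card (occ_right \<eta>)) - int (card (holes_left \<eta>)) =
         (\<Sum>x\<in>W. balance_weight x (\<eta> x))"
proof -
  have "(\<Sum>x\<in>W. balance_weight x (\<eta> x)) =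
        (\<Sum>x\<in>occ_right \<eta> \<union> holes_left \<eta>. balance_weight x (\<eta> x))"
    by (rule window_sum) (use assms in \<open>auto simp: balance_weight_def\<close>)
  also have "\<dots> = (\<Sum>x\<in>occ_right \<eta>. balance_weight x (\<eta> x)) +
                  (\<Sum>x\<in>holes_left \<eta>. balance_weight x (\<eta> x))"
    using assms by (intro sum.union_disjoint) (auto simp: occ_right_def holes_left_def)
  also have "(\<Sum>x\<in>occ_right \<eta>. balance_weight x (\<eta> x)) = (\<Sum>x\<in>occ_right \<eta>. 1)"
    by (intro sum.cong) (auto simp: balance_weight_def occ_right_def)
  also have "(\<Sum>x\<in>holes_left \<eta>. balance_weight x (\<eta> x)) = (\<Sum>x\<in>holes_left \<eta>. -1)"
    by (intro sum.cong) (auto simp: balance_weight_def holes_left_def)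
  finally show ?thesis by simp
qed

lemma sum_swp_window:
  fixes \<phi> :: "int \<Rightarrow> bool \<Rightarrow> 'b::ab_group_add"
  assumes "finite W" "{x, x+1} \<subseteq> W"
  shows "(\<Sum>y\<in>W. \<phi> y (swp \<eta> x y)) - (\<Sum>y\<in>W. \<phi> y (\<eta> y)) =
    \<phi> x (\<eta> (x+1)) + \<phi> (x+1) (\<eta> x) - \<phi> x (\<eta> x) - \<phi> (x+1) (\<eta> (x+1))"
proof -
  have split: "(\<Sum>y\<in>W. f y) = f x + f (x+1) + (\<Sum>y\<in>W - {x, x+1}. f y)" for f :: "int \<Rightarrow> 'b"
  proof -
    have "(\<Sum>y\<in>W. f y) = (\<Sum>y\<in>{x, x+1}. f y) + (\<Sum>y\<in>W - {x, x+1}. f y)"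
      using assms by (metis add.commute sum.subset_diff finite_subset)
    then show ?thesis by simp
  qed
  have rest: "(\<Sum>y\<in>W - {x, x+1}. \<phi> y (swp \<eta> x y)) = (\<Sum>y\<in>W - {x, x+1}. \<phi> y (\<eta> y))"
    by (intro sum.cong) (auto simp: swp_apply)
  show ?thesis
    by (subst split, subst split[of "\<lambda>y. \<phi> y (\<eta> y)"]) (simp add: rest swp_apply algebra_simps)
qed

lemma U0_swp:
  assumes "\<eta> \<in> U0"
  shows "swp \<eta> x \<in> U0 \<and> area (swp \<eta> x) = area \<eta> + (if x \<in> bonds \<eta> then bond_sign \<eta> x else 0)"
proof -
  let ?\<zeta> = "swp \<eta> x"
  define W where "W = occ_right \<eta> \<union> holes_left \<eta> \<union> {x, x+1}"
  have fin: "finite (occ_right \<eta>)" "finite (holes_left \<eta>)" using assms by (auto simp: U0_iff)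
  have fin': "finite (occ_right ?\<zeta>)" "finite (holes_left ?\<zeta>)"
    using fin occ_right_swp[of \<eta> x] holes_left_swp[of \<eta> x] by (auto intro: finite_subset)
  have W: "finite W" "occ_right \<eta> \<union> holes_left \<eta> \<subseteq> W"
    "occ_right ?\<zeta> \<union> holes_left ?\<zeta> \<subseteq> W" "{x, x+1} \<subseteq> W"
    using fin occ_right_swp[of \<eta> x] holes_left_swp[of \<eta> x] by (auto simp: W_def)
  have "int (card (occ_right ?\<zeta>)) - int (card (holes_left ?\<zeta>))
        - (int (card (occ_right \<eta>)) - int (card (holes_left \<eta>))) =
        (\<Sum>y\<in>W. balance_weight y (?\<zeta> y)) - (\<Sum>y\<in>W. balance_weight y (\<eta> y))"
    using balance_window[OF W(1) W(3) fin'] balance_window[OF W(1) W(2) fin] by simp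
  also have "\<dots> = 0"
    using sum_swp_window[OF W(1) W(4), of balance_weight \<eta>]
    by (cases "\<eta> x"; cases "\<eta> (x+1)"; cases "0 \<le> x"; cases "x = -1") (auto simp: balance_weight_def)
  finally have card_eq: "card (occ_right ?\<zeta>) = card (holes_left ?\<zeta>)"
    using assms by (simp add: U0_iff)
  have "area ?\<zeta> - area \<eta> =
        (\<Sum>y\<in>W. area_weight y (?\<zeta> y)) - (\<Sum>y\<in>W. area_weight y (\<eta> y))"
    using area_window[OF W(1) W(3) fin'] area_window[OF W(1) W(2) fin] by simp
  also have "\<dots> = (if x \<in> bonds \<eta> then bond_sign \<eta> x else 0)"
    using sum_swp_window[OF W(1) W(4), of area_weight \<eta>]
    by (cases "\<eta> x"; cases "\<eta> (x+1)"; cases "0 \<le> x"; cases "x = -1")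
       (auto simp: area_weight_def bonds_def bond_sign_def)
  finally show ?thesis using card_eq fin' by (simp add: U0_iff)
qed

lemma bonds_subset:
  "bonds \<eta> \<subseteq> occ_right \<eta> \<union> (\<lambda>y. y - 1) ` occ_right \<eta> \<union>
              holes_left \<eta> \<union> (\<lambda>z. z - 1) ` holes_left \<eta> \<union> {-1}"
proof
  fix x assume x: "x \<in> bonds \<eta>"
  consider "0 \<le> x" | "x = -1" | "x \<le> -2" by linarith
  then show "x \<in> occ_right \<eta> \<union> (\<lambda>y. y - 1) ` occ_right \<eta> \<union>
                 holes_left \<eta> \<union> (\<lambda>z. z - 1) ` holes_left \<eta> \<union> {-1}"
  proof cases
    case 1
    then have "x \<in> occ_right \<eta> \<or> x + 1 \<in> occ_right \<eta>"
      using x by (auto simp: bonds_def occ_right_def)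
    moreover have "x \<in> (\<lambda>y. y - 1) ` occ_right \<eta>" if "x + 1 \<in> occ_right \<eta>"
      using that by (rule image_eqI[rotated]) simp
    ultimately show ?thesis by blast
  next
    case 3
    then have "x \<in> holes_left \<eta> \<or> x + 1 \<in> holes_left \<eta>"
      using x by (auto simp: bonds_def holes_left_def)
    moreover have "x \<in> (\<lambda>z. z - 1) ` holes_left \<eta>" if "x + 1 \<in> holes_left \<eta>"
      using that by (rule image_eqI[rotated]) simp
    ultimately show ?thesis by blast
  qed simp
qed

lemma bonds_finite_card:
  assumes "\<eta> \<in> U0"
  shows "finite (bonds \<eta>) \<and> card (bonds \<eta>) \<le> 4 * card (occ_right \<eta>) + 1"
proof -
  have fin: "finite (occ_right \<eta>)" "finite (holes_left \<eta>)"
    and card_eq: "card (occ_right \<eta>) = card (holes_left \<eta>)"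
    using assms by (auto simp: U0_iff)
  let ?S = "occ_right \<eta> \<union> (\<lambda>y. y - 1) ` occ_right \<eta> \<union>
            holes_left \<eta> \<union> (\<lambda>z. z - 1) ` holes_left \<eta> \<union> {-1}"
  have "card ?S \<le> card (occ_right \<eta>) + card ((\<lambda>y. y - 1) ` occ_right \<eta>) +
                  card (holes_left \<eta>) + card ((\<lambda>z. z - 1) ` holes_left \<eta>) + card {-1::int}"
    by (intro order.trans[OF card_Un_le] add_mono order_refl)
  also have "\<dots> \<le> 4 * card (occ_right \<eta>) + 1"
    using card_image_le[OF fin(1), of "\<lambda>y. y - 1"] card_image_le[OF fin(2), of "\<lambda>y. y - 1"] card_eq
    by simp
  moreover have "finite ?S" using fin by simp
  ultimately show ?thesis using bonds_subset[of \<eta>]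
    by (meson card_mono finite_subset order_trans)
qed

lemma U0_frozen:
  assumes "\<eta> \<in> U0"
  obtains a b where "a < 0" "0 \<le> b" "\<And>x. x \<le> a \<Longrightarrow> \<eta> x" "\<And>x. b \<le> x \<Longrightarrow> \<not> \<eta> x"
proof -
  have fin: "finite (occ_right \<eta>)" "finite (holes_left \<eta>)" using assms by (auto simp: U0_iff)
  obtain a where a: "a < 0" "\<And>z. z \<in> holes_left \<eta> \<Longrightarrow> a < z"
  proof
    have "Min (insert 0 (holes_left \<eta>)) \<le> 0" using fin by (intro Min_le) auto
    then show "Min (insert 0 (holes_left \<eta>)) - 1 < 0" by linarith
    show "Min (insert 0 (holes_left \<eta>)) - 1 < z" if "z \<in> holes_left \<eta>" for z
    proof -
      have "Min (insert 0 (holes_left \<eta>)) \<le> z" using fin that by (intro Min_le) auto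
      then show ?thesis by linarith
    qed
  qed
  obtain b where b: "0 \<le> b" "\<And>z. z \<in> occ_right \<eta> \<Longrightarrow> z < b"
  proof
    have "0 \<le> Max (insert 0 (occ_right \<eta>))" using fin by (intro Max_ge) auto
    then show "0 \<le> Max (insert 0 (occ_right \<eta>)) + 1" by linarith
    show "z < Max (insert 0 (occ_right \<eta>)) + 1" if "z \<in> occ_right \<eta>" for z
    proof -
      have "z \<le> Max (insert 0 (occ_right \<eta>))" using fin that by (intro Max_ge) auto
      then show ?thesis by linarith
    qed
  qed
  show ?thesis
  proof (rule that[OF a(1) b(1)])
    show "\<eta> x" if "x \<le> a" for x
    proof (rule ccontr)
      assume "\<not> \<eta> x"
      then have "x \<in> holes_left \<eta>" using that a by (simp add: holes_left_def)
      then show False using a(2) that by force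
    qed
    show "\<not> \<eta> x" if "b \<le> x" for x
    proof
      assume "\<eta> x"
      then have "x \<in> occ_right \<eta>" using that b by (simp add: occ_right_def)
      then show False using b(2) that by force
    qed
  qed
qed

lemma telescope_int:
  fixes f :: "int \<Rightarrow> int"
  shows "(\<Sum>x\<in>{a..<a + int n}. f x - f (x+1)) = f a - f (a + int n)"
proof (induction n)
  case (Suc n)
  have "{a..<a + int (Suc n)} = insert (a + int n) {a..<a + int n}" by auto
  then show ?case using Suc by (simp add: algebra_simps)
qed simp

text \<open>
  Right jumps outnumber left jumps by exactly one: the bond signs telescope between the full
  left end and the empty right end.  This is why the generator maps the area to 1/2.
\<close>
lemma sum_bond_sign:
  assumes "\<eta> \<in> U0"
  shows "(\<Sum>x\<in>bonds \<eta>. bond_sign \<eta> x) = 1"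
proof -
  obtain a b where ab: "a < 0" "0 \<le> b" and full: "\<And>x. x \<le> a \<Longrightarrow> \<eta> x"
    and empty: "\<And>x. b \<le> x \<Longrightarrow> \<not> \<eta> x"
    using U0_frozen[OF assms] by metis
  have sub: "bonds \<eta> \<subseteq> {a..<b}"
  proof
    fix x assume "x \<in> bonds \<eta>"
    then have "\<eta> x \<noteq> \<eta> (x+1)" by (simp add: bonds_def)
    then show "x \<in> {a..<b}" using full[of x] full[of "x+1"] empty[of x] empty[of "x+1"] by force
  qed
  have "(\<Sum>x\<in>bonds \<eta>. bond_sign \<eta> x) = (\<Sum>x\<in>{a..<b}. bond_sign \<eta> x)"
    using sub by (intro sum.mono_neutral_left) (auto simp: bonds_def bond_sign_def)
  also have "{a..<b} = {a..<a + int (nat (b - a))}" using ab by simp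
  also have "(\<Sum>x\<in>\<dots>. bond_sign \<eta> x) = 1"
    using telescope_int[of "\<lambda>x. if \<eta> x then 1 else 0" a "nat (b-a)"] full[of a] empty[of b] ab
    by (simp add: bond_sign_def)
  finally show ?thesis .
qed

lemma sum_distinct_lower:
  fixes S :: "int set"
  assumes "finite S" "\<And>x. x \<in> S \<Longrightarrow> 0 \<le> x"
  shows "int (card S) * (int (card S) - 1) \<le> 2 * (\<Sum>S)"
  using assms
proof (induction "card S" arbitrary: S)
  case 0 then show ?case by (simp add: sum_nonneg)
next
  case (Suc n)
  define m where "m = Max S"
  have "S \<noteq> {}" using Suc(2) by auto
  then have m: "m \<in> S" using Suc(3) by (simp add: m_def)
  have "card S \<le> card {0..m}" using Suc by (intro card_mono) (auto simp: m_def)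
  then have card_le: "int (card S) \<le> m + 1" using m Suc(4)[OF m] by simp
  have "card (S - {m}) = n" using Suc(2,3) m by simp
  then have IH: "int n * (int n - 1) \<le> 2 * \<Sum>(S - {m})"
    using Suc(1)[of "S - {m}"] Suc(3,4) by auto
  have "\<Sum>S = m + \<Sum>(S - {m})" using Suc m by (simp add: sum.remove)
  then show ?case using IH card_le Suc(2)[symmetric] by (simp add: algebra_simps)
qed

lemma area_lower:
  assumes "\<eta> \<in> U0"
  shows "int (card (occ_right \<eta>)) ^ 2 \<le> area \<eta>"
proof -
  have fin: "finite (occ_right \<eta>)" "finite (holes_left \<eta>)"
    and card_eq: "card (occ_right \<eta>) = card (holes_left \<eta>)"
    using assms by (auto simp: U0_iff)
  define k where "k = int (card (occ_right \<eta>))"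
  have right: "k * (k - 1) \<le> 2 * (\<Sum>y\<in>occ_right \<eta>. y)"
    unfolding k_def by (rule sum_distinct_lower) (use fin in \<open>auto simp: occ_right_def\<close>)
  have inj: "inj_on (\<lambda>z. - z - 1) (holes_left \<eta>)" by (auto simp: inj_on_def)
  have card_img: "card ((\<lambda>z. - z - 1) ` holes_left \<eta>) = card (holes_left \<eta>)"
    using card_image[OF inj] .
  have "k * (k - 1) \<le> 2 * \<Sum>((\<lambda>z. - z - 1) ` holes_left \<eta>)"
    unfolding k_def card_eq card_img[symmetric]
    by (rule sum_distinct_lower) (use fin in \<open>auto simp: holes_left_def\<close>)
  also have "\<Sum>((\<lambda>z. - z - 1) ` holes_left \<eta>) = (\<Sum>z\<in>holes_left \<eta>. - z) - k"
    using card_eq by (simp add: sum.reindex[OF inj] sum_subtractf k_def)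
  finally show ?thesis
    using right unfolding area_def k_def[symmetric] by (simp add: power2_eq_square algebra_simps)
qed

lemma area_nonneg: "\<eta> \<in> U0 \<Longrightarrow> 0 \<le> area \<eta>"
  by (meson area_lower order_trans zero_le_power2)

lemma card_bonds_area:
  assumes "\<eta> \<in> U0"
  shows "real (card (bonds \<eta>)) / 2 \<le> 2 * sqrt (real_of_int (area \<eta>)) + 1"
proof -
  have "real (card (occ_right \<eta>)) \<le> sqrt (real_of_int (area \<eta>))"
    using area_lower[OF assms] by (metis of_int_le_iff of_int_of_nat_eq of_int_power real_le_rsqrt)
  then show ?thesis using bonds_finite_card[OF assms] by simp
qed

lemma Ostep_U0: "Ostep \<in> U0" and area_Ostep: "area Ostep = 0"
proof -
  have "occ_right Ostep = {}" "holes_left Ostep = {}"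
    by (auto simp: occ_right_def holes_left_def Ostep_def)
  then show "Ostep \<in> U0" "area Ostep = 0" by (auto simp: U0_iff area_def)
qed

section \<open>The jump chain at p = 1/2\<close>

abbreviation q :: "config \<Rightarrow> real" where "q \<equiv> qtot (1/2)"
abbreviation P :: "nat \<Rightarrow> config \<Rightarrow> real \<Rightarrow> real" where "P n \<eta> t \<equiv> pn (1/2) n \<eta> t"

lemma preds_eq: "preds \<eta> = swp \<eta> ` bonds \<eta>"
  by (simp add: preds_def bonds_def)

lemma inj_swp: "inj_on (swp \<eta>) (bonds \<eta>)"
  using swp_inj by (metis inj_onI)

lemma preds_sym: "\<zeta> \<in> preds \<eta> \<Longrightarrow> \<eta> \<in> preds \<zeta>"
proof -
  assume "\<zeta> \<in> preds \<eta>"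
  then obtain x where x: "x \<in> bonds \<eta>" "\<zeta> = swp \<eta> x" by (auto simp: preds_eq)
  then have "x \<in> bonds \<zeta>" "\<eta> = swp \<zeta> x" using bonds_swp swp_swp by auto
  then show ?thesis unfolding preds_eq by (rule rev_image_eqI)
qed

lemma rate_half:
  assumes "\<zeta> \<in> preds \<eta>"
  shows "rate (1/2) \<zeta> \<eta> = 1/2"
proof -
  obtain x where x: "x \<in> bonds \<zeta>" and e: "\<eta> = swp \<zeta> x"
    using preds_sym[OF assms] by (auto simp: preds_eq)
  have u: "y = x" if "swp \<zeta> y = swp \<zeta> x" for y using swp_inj[OF x] that by simp
  have right: "(\<exists>y. \<zeta> y \<and> \<not> \<zeta> (y+1) \<and> \<eta> = swp \<zeta> y) \<longleftrightarrow> \<zeta> x"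
    unfolding e using u x by (auto simp: bonds_def)
  have left: "(\<exists>y. \<not> \<zeta> y \<and> \<zeta> (y+1) \<and> \<eta> = swp \<zeta> y) \<longleftrightarrow> \<not> \<zeta> x"
    unfolding e using u x by (auto simp: bonds_def)
  show ?thesis unfolding rate_def right left by simp
qed

lemma qtot_half:
  assumes "\<eta> \<in> U0"
  shows "q \<eta> = real (card (bonds \<eta>)) / 2"
proof -
  have fin: "finite (bonds \<eta>)" using bonds_finite_card[OF assms] by simp
  have "bonds \<eta> = {x. \<eta> x \<and> \<not> \<eta> (x+1)} \<union> {x. \<not> \<eta> x \<and> \<eta> (x+1)}" by (auto simp: bonds_def)
  moreover have "finite {x. \<eta> x \<and> \<not> \<eta> (x+1)}" "finite {x. \<not> \<eta> x \<and> \<eta> (x+1)}"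
    using fin by (auto intro: rev_finite_subset simp: bonds_def)
  ultimately have "card (bonds \<eta>) = card {x. \<eta> x \<and> \<not> \<eta> (x+1)} + card {x. \<not> \<eta> x \<and> \<eta> (x+1)}"
    by (simp add: card_Un_disjoint disjoint_iff)
  then show ?thesis by (simp add: qtot_def)
qed

lemma q_nonneg: "\<eta> \<in> U0 \<Longrightarrow> 0 \<le> q \<eta>"
  by (simp add: qtot_half)

lemma q_area: "\<eta> \<in> U0 \<Longrightarrow> q \<eta> \<le> 2 * sqrt (real_of_int (area \<eta>)) + 1"
  using card_bonds_area[of \<eta>] qtot_half[of \<eta>] by simp

lemma finite_preds: "\<eta> \<in> U0 \<Longrightarrow> finite (preds \<eta>)"
  using bonds_finite_card by (simp add: preds_eq)

lemma sum_preds: "(\<Sum>\<zeta>\<in>preds \<eta>. f \<zeta>) = (\<Sum>x\<in>bonds \<eta>. f (swp \<eta> x))"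
  by (simp add: preds_eq sum.reindex[OF inj_swp])

lemma pn_Suc_half:
  "P (Suc n) \<eta> t = integral {0..t} (\<lambda>s. (\<Sum>\<zeta>\<in>preds \<eta>. P n \<zeta> s) / 2 * exp (- q \<eta> * (t - s)))"
proof -
  have "(\<Sum>\<zeta>\<in>preds \<eta>. P n \<zeta> s * rate (1/2) \<zeta> \<eta>) = (\<Sum>\<zeta>\<in>preds \<eta>. P n \<zeta> s) / 2" for s
    by (simp add: rate_half sum_divide_distrib)
  then show ?thesis by (simp only: pn.simps)
qed

fun reach :: "nat \<Rightarrow> config set" where
  "reach 0 = {Ostep}"
| "reach (Suc n) = (\<Union>\<zeta>\<in>reach n. preds \<zeta>)"

lemma reach_U0: "reach n \<subseteq> U0"
proof (induction n)
  case 0 then show ?case using Ostep_U0 by simp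
next
  case (Suc n) then show ?case using U0_swp by (auto simp: preds_eq)
qed

lemma reach_finite: "finite (reach n)"
  by (induction n) (use reach_U0 finite_preds in auto)

lemma reach_area: "\<eta> \<in> reach n \<Longrightarrow> area \<eta> \<le> int n"
proof (induction n arbitrary: \<eta>)
  case 0 then show ?case by (simp add: area_Ostep)
next
  case (Suc n)
  then obtain \<zeta> x where z: "\<zeta> \<in> reach n" "x \<in> bonds \<zeta>" "\<eta> = swp \<zeta> x"
    by (auto simp: preds_eq)
  then have "area \<eta> = area \<zeta> + bond_sign \<zeta> x" using U0_swp[of \<zeta> x] reach_U0 by auto
  moreover have "bond_sign \<zeta> x \<le> 1" by (simp add: bond_sign_def)
  ultimately show ?case using Suc.IH[OF z(1)] by simp
qed

lemma pn_zero: "\<eta> \<notin> reach n \<Longrightarrow> P n \<eta> t = 0"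
proof (induction n arbitrary: \<eta> t)
  case 0 then show ?case by simp
next
  case (Suc n)
  have "P n \<zeta> s = 0" if "\<zeta> \<in> preds \<eta>" for \<zeta> s
    using Suc.prems preds_sym[OF that] Suc.IH by auto
  then show ?case by (simp add: pn_Suc_half)
qed

definition inflow :: "nat \<Rightarrow> config \<Rightarrow> real \<Rightarrow> real" where
  "inflow n \<eta> t = (case n of 0 \<Rightarrow> 0 | Suc m \<Rightarrow> (\<Sum>\<zeta>\<in>preds \<eta>. P m \<zeta> t) / 2)"

lemma pn_Suc_exp:
  "P (Suc n) \<eta> t = exp (- q \<eta> * t) * integral {0..t} (\<lambda>s. inflow (Suc n) \<eta> s * exp (q \<eta> * s))"
proof -
  have "(\<lambda>s. (\<Sum>\<zeta>\<in>preds \<eta>. P n \<zeta> s) / 2 * exp (- q \<eta> * (t - s))) =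
        (\<lambda>s. exp (- q \<eta> * t) * (inflow (Suc n) \<eta> s * exp (q \<eta> * s)))"
    by (rule ext) (simp add: inflow_def mult_exp_exp algebra_simps)
  then show ?thesis by (simp only: pn_Suc_half) simp
qed

lemma variation_of_constants:
  fixes F :: "real \<Rightarrow> real" and c :: real
  assumes cont: "\<And>T. continuous_on {0..T} F" and nonneg: "\<And>s. 0 \<le> F s"
  defines "G \<equiv> \<lambda>t. exp (- c * t) * integral {0..t} (\<lambda>s. F s * exp (c * s))"
  shows "continuous_on {0..T} G" and "0 \<le> G t"
    and "0 < t \<Longrightarrow> (G has_real_derivative F t - c * G t) (at t)"
proof -
  define g where "g = (\<lambda>s. F s * exp (c * s))"
  have gc: "continuous_on {0..T} g" for T
    unfolding g_def using cont by (auto intro!: continuous_intros)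
  show "continuous_on {0..T} G"
    unfolding G_def g_def[symmetric]
    by (intro continuous_intros indefinite_integral_continuous_1 integrable_continuous_real gc)
  have "0 \<le> integral {0..t} g" if "0 \<le> t"
    by (rule integral_nonneg) (use gc nonneg in \<open>auto simp: g_def intro!: integrable_continuous_real\<close>)
  then show "0 \<le> G t" unfolding G_def g_def[symmetric] by (cases "0 \<le> t") auto
  assume t: "0 < t"
  have "((\<lambda>x. integral {0..x} g) has_real_derivative g t) (at t within {0..t+1})"
    by (rule integral_has_real_derivative) (use gc t in auto)
  moreover have "at t within {0..t+1} = at t"
    by (rule at_within_interior) (use t in auto)
  ultimately have "((\<lambda>x. integral {0..x} g) has_real_derivative g t) (at t)" by simp
  then have "(G has_real_derivative
      exp (- c * t) * (- c) * integral {0..t} g + exp (- c * t) * g t) (at t)"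
    unfolding G_def g_def[symmetric] by (auto intro!: derivative_eq_intros)
  moreover have "exp (- c * t) * (- c) * integral {0..t} g + exp (- c * t) * g t = F t - c * G t"
    unfolding G_def g_def by (simp add: algebra_simps mult_exp_exp)
  ultimately show "(G has_real_derivative F t - c * G t) (at t)" by simp
qed

lemma pn_props:
  "(\<forall>T. continuous_on {0..T} (P n \<eta>)) \<and> (\<forall>t. 0 \<le> P n \<eta> t) \<and>
   (\<forall>t>0. (P n \<eta> has_real_derivative (inflow n \<eta> t - q \<eta> * P n \<eta> t)) (at t))"
proof (induction n arbitrary: \<eta>)
  case 0
  show ?case
  proof (cases "\<eta> = Ostep")
    case True
    have "((\<lambda>t. exp (- q \<eta> * t)) has_real_derivative (- q \<eta> * exp (- q \<eta> * t))) (at t)" for t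
      by (auto intro!: derivative_eq_intros)
    then show ?thesis using True by (auto simp: inflow_def intro!: continuous_intros)
  qed (simp add: inflow_def)
next
  case (Suc n)
  have cont: "continuous_on {0..T} (inflow (Suc n) \<eta>)" for T
    unfolding inflow_def using Suc.IH by (auto intro!: continuous_intros)
  have nonneg: "0 \<le> inflow (Suc n) \<eta> s" for s
    unfolding inflow_def using Suc.IH by (auto intro!: sum_nonneg)
  note voc = variation_of_constants[where F = "inflow (Suc n) \<eta>" and c = "q \<eta>", OF cont nonneg]
  have e: "P (Suc n) \<eta> =
      (\<lambda>t. exp (- q \<eta> * t) * integral {0..t} (\<lambda>s. inflow (Suc n) \<eta> s * exp (q \<eta> * s)))"
    by (rule ext) (rule pn_Suc_exp)
  show ?case unfolding e using voc by blast
qed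

lemma pn_nonneg: "0 \<le> P n \<eta> t"
  using pn_props by blast

lemma pn_cont: "continuous_on {0..T} (P n \<eta>)"
  using pn_props by blast

lemma pn_deriv: "t > 0 \<Longrightarrow> (P n \<eta> has_real_derivative (inflow n \<eta> t - q \<eta> * P n \<eta> t)) (at t)"
  using pn_props by blast

lemma pn_at0: "P n \<eta> 0 = (if n = 0 \<and> \<eta> = Ostep then 1 else 0)"
  by (cases n) (auto simp: pn_Suc_exp)

section \<open>Truncated expectations and the forward equation\<close>

text \<open>
  expect N t f: expectation of f(X_t) on the event that fewer than N jumps occurred by time t.
  outflow N t f: rate at which mass (weighted by f) leaves level N by an (N+1)-st jump.
  gen: the generator of the symmetric exclusion process.
\<close>
definition expect :: "nat \<Rightarrow> real \<Rightarrow> (config \<Rightarrow> real) \<Rightarrow> real" where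
  "expect N t f = (\<Sum>n<N. \<Sum>\<eta>\<in>reach n. P n \<eta> t * f \<eta>)"

definition outflow :: "nat \<Rightarrow> real \<Rightarrow> (config \<Rightarrow> real) \<Rightarrow> real" where
  "outflow N t f = (\<Sum>\<eta>\<in>reach N. P N \<eta> t * q \<eta> * f \<eta>)"

definition gen :: "(config \<Rightarrow> real) \<Rightarrow> config \<Rightarrow> real" where
  "gen f \<zeta> = (\<Sum>x\<in>bonds \<zeta>. f (swp \<zeta> x) - f \<zeta>) / 2"

lemma sum_inflow:
  "(\<Sum>\<eta>\<in>reach (Suc m). inflow (Suc m) \<eta> t * f \<eta>) =
   (\<Sum>\<zeta>\<in>reach m. P m \<zeta> t * ((\<Sum>\<eta>\<in>preds \<zeta>. f \<eta>) / 2))"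
proof -
  have "inflow (Suc m) \<eta> t * f \<eta> = (\<Sum>\<zeta>\<in>{\<zeta>\<in>reach m. \<eta> \<in> preds \<zeta>}. P m \<zeta> t * f \<eta> / 2)"
    if "\<eta> \<in> reach (Suc m)" for \<eta>
  proof -
    have "finite (preds \<eta>)" using that reach_U0 finite_preds by blast
    then have "(\<Sum>\<zeta>\<in>preds \<eta>. P m \<zeta> t) = (\<Sum>\<zeta>\<in>{\<zeta>\<in>reach m. \<eta> \<in> preds \<zeta>}. P m \<zeta> t)"
      using preds_sym pn_zero by (intro sum.mono_neutral_right) blast+
    then show ?thesis by (simp add: inflow_def sum_divide_distrib sum_distrib_right)
  qed
  then have "(\<Sum>\<eta>\<in>reach (Suc m). inflow (Suc m) \<eta> t * f \<eta>) =
        (\<Sum>\<eta>\<in>reach (Suc m). \<Sum>\<zeta>\<in>{\<zeta>\<in>reach m. \<eta> \<in> preds \<zeta>}. P m \<zeta> t * f \<eta> / 2)"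
    by (rule sum.cong[OF refl])
  also have "\<dots> = (\<Sum>\<zeta>\<in>reach m. \<Sum>\<eta>\<in>{\<eta>\<in>reach (Suc m). \<eta> \<in> preds \<zeta>}. P m \<zeta> t * f \<eta> / 2)"
    by (rule sum.swap_restrict) (rule reach_finite)+
  also have "\<dots> = (\<Sum>\<zeta>\<in>reach m. \<Sum>\<eta>\<in>preds \<zeta>. P m \<zeta> t * f \<eta> / 2)"
    by (intro sum.cong refl) auto
  also have "\<dots> = (\<Sum>\<zeta>\<in>reach m. P m \<zeta> t * ((\<Sum>\<eta>\<in>preds \<zeta>. f \<eta>) / 2))"
    by (simp add: sum_divide_distrib sum_distrib_left)
  finally show ?thesis .
qed

lemma gen_local:
  assumes "\<zeta> \<in> U0"
  shows "(\<Sum>\<eta>\<in>preds \<zeta>. f \<eta>) / 2 - q \<zeta> * f \<zeta> = gen f \<zeta>"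
  using bonds_finite_card[OF assms]
  unfolding gen_def sum_preds qtot_half[OF assms] by (simp add: sum_subtractf field_simps)

lemma expect_deriv:
  assumes "t > 0"
  shows "((\<lambda>t. expect (Suc N) t f) has_real_derivative
           (expect N t (gen f) - outflow N t f)) (at t)"
proof -
  have d: "((\<lambda>t. expect (Suc N) t f) has_real_derivative
      (\<Sum>n<Suc N. \<Sum>\<eta>\<in>reach n. (inflow n \<eta> t - q \<eta> * P n \<eta> t) * f \<eta>)) (at t)"
    unfolding expect_def by (intro DERIV_sum DERIV_cmult_right pn_deriv assms)
  have in_sum: "(\<Sum>n<Suc N. \<Sum>\<eta>\<in>reach n. inflow n \<eta> t * f \<eta>) =
            (\<Sum>n<N. \<Sum>\<zeta>\<in>reach n. P n \<zeta> t * ((\<Sum>\<eta>\<in>preds \<zeta>. f \<eta>) / 2))"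
    by (simp only: sum.lessThan_Suc_shift sum_inflow) (simp add: inflow_def)
  have out_sum: "(\<Sum>n<Suc N. \<Sum>\<eta>\<in>reach n. q \<eta> * P n \<eta> t * f \<eta>) =
            (\<Sum>n<N. \<Sum>\<zeta>\<in>reach n. P n \<zeta> t * (q \<zeta> * f \<zeta>)) + outflow N t f"
    by (simp add: outflow_def algebra_simps)
  have gen_sum: "(\<Sum>n<N. \<Sum>\<zeta>\<in>reach n. P n \<zeta> t * ((\<Sum>\<eta>\<in>preds \<zeta>. f \<eta>) / 2)) -
            (\<Sum>n<N. \<Sum>\<zeta>\<in>reach n. P n \<zeta> t * (q \<zeta> * f \<zeta>)) = expect N t (gen f)"
    unfolding expect_def sum_subtractf[symmetric]
  proof (intro sum.cong refl)
    fix n \<zeta> assume "\<zeta> \<in> reach n"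
    then have "\<zeta> \<in> U0" using reach_U0 by blast
    then show "P n \<zeta> t * ((\<Sum>\<eta>\<in>preds \<zeta>. f \<eta>) / 2) - P n \<zeta> t * (q \<zeta> * f \<zeta>) = P n \<zeta> t * gen f \<zeta>"
      using gen_local[of \<zeta> f] by (metis right_diff_distrib times_divide_eq_right)
  qed
  have "(\<Sum>n<Suc N. \<Sum>\<eta>\<in>reach n. (inflow n \<eta> t - q \<eta> * P n \<eta> t) * f \<eta>) =
        (\<Sum>n<Suc N. \<Sum>\<eta>\<in>reach n. inflow n \<eta> t * f \<eta>) -
        (\<Sum>n<Suc N. \<Sum>\<eta>\<in>reach n. q \<eta> * P n \<eta> t * f \<eta>)"
    by (simp add: sum_subtractf left_diff_distrib)
  also have "\<dots> = expect N t (gen f) - outflow N t f" using in_sum out_sum gen_sum by simp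
  finally show ?thesis using d by simp
qed

lemma expect_cont: "continuous_on {0..T} (\<lambda>t. expect N t f)"
  unfolding expect_def by (intro continuous_intros pn_cont)

lemma expect_0: "expect 0 t f = 0"
  by (simp add: expect_def)

lemma expect_at0: "expect (Suc N) 0 f = f Ostep"
proof -
  have "(\<Sum>n<Suc N. \<Sum>\<eta>\<in>reach n. P n \<eta> 0 * f \<eta>) = (\<Sum>n<Suc N. if n = 0 then f Ostep else 0)"
    by (intro sum.cong refl) (auto simp: pn_at0)
  then show ?thesis unfolding expect_def by (simp add: sum.delta)
qed

lemma expect_mono: "(\<And>\<eta>. \<eta> \<in> U0 \<Longrightarrow> f \<eta> \<le> g \<eta>) \<Longrightarrow> expect N t f \<le> expect N t g"
  unfolding expect_def using reach_U0 by (intro sum_mono mult_left_mono pn_nonneg) auto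

lemma outflow_nonneg: "(\<And>\<eta>. \<eta> \<in> U0 \<Longrightarrow> 0 \<le> f \<eta>) \<Longrightarrow> 0 \<le> outflow N t f"
  unfolding outflow_def using reach_U0
  by (intro sum_nonneg mult_nonneg_nonneg pn_nonneg q_nonneg) auto

lemma expect_cmult: "expect N t (\<lambda>\<eta>. c * f \<eta>) = c * expect N t f"
  unfolding expect_def by (simp add: sum_distrib_left algebra_simps)

lemma expect_diff: "expect N t (\<lambda>\<eta>. f \<eta> - g \<eta>) = expect N t f - expect N t g"
  unfolding expect_def by (simp add: right_diff_distrib sum_subtractf)

lemma gen_const: "gen (\<lambda>_. c) \<zeta> = 0"
  by (simp add: gen_def)

lemma deriv_compare:
  fixes g h g' h' :: "real \<Rightarrow> real"
  assumes "0 \<le> T" "continuous_on {0..T} g" "continuous_on {0..T} h"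
    "\<And>t. 0 < t \<Longrightarrow> t < T \<Longrightarrow> (g has_real_derivative g' t) (at t)"
    "\<And>t. 0 < t \<Longrightarrow> t < T \<Longrightarrow> (h has_real_derivative h' t) (at t)"
    "\<And>t. 0 < t \<Longrightarrow> t < T \<Longrightarrow> g' t \<le> h' t"
  shows "g T - g 0 \<le> h T - h 0"
proof -
  have "(\<lambda>t. g t - h t) T \<le> (\<lambda>t. g t - h t) 0"
  proof (rule DERIV_nonpos_imp_decreasing_open[OF assms(1)])
    fix t assume t: "0 < t" "t < T"
    show "\<exists>y. ((\<lambda>t. g t - h t) has_real_derivative y) (at t) \<and> y \<le> 0"
      using assms(4-6)[OF t] by (intro exI[of _ "g' t - h' t"]) (auto intro!: derivative_eq_intros)
  next
    show "continuous_on {0..T} (\<lambda>t. g t - h t)" using assms(2,3) by (intro continuous_intros)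
  qed
  then show ?thesis by simp
qed

lemma expect_one_le: "0 \<le> t \<Longrightarrow> expect N t (\<lambda>_. 1) \<le> 1"
proof (cases N)
  case 0 then show ?thesis by (simp add: expect_0)
next
  case (Suc M)
  assume t: "0 \<le> t"
  have "expect (Suc M) t (\<lambda>_. 1) - expect (Suc M) 0 (\<lambda>_. 1) \<le> (\<lambda>_. 0::real) t - (\<lambda>_. 0) 0"
  proof (rule deriv_compare[OF t expect_cont continuous_on_const])
    fix s :: real assume s: "0 < s" "s < t"
    show "((\<lambda>t. expect (Suc M) t (\<lambda>_. 1)) has_real_derivative
           (expect M s (gen (\<lambda>_. 1)) - outflow M s (\<lambda>_. 1))) (at s)"
      using expect_deriv s by blast
    show "((\<lambda>_. 0) has_real_derivative 0) (at s)" by simp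
    show "expect M s (gen (\<lambda>_. 1)) - outflow M s (\<lambda>_. 1) \<le> 0"
      using outflow_nonneg[of "\<lambda>_. 1" M s] by (simp add: gen_const expect_def)
  qed
  then show ?thesis using Suc expect_at0[of M "\<lambda>_. 1"] by simp
qed

section \<open>No mass escapes to infinitely many jumps\<close>

definition level_mass :: "nat \<Rightarrow> real \<Rightarrow> real" where
  "level_mass N t = (\<Sum>\<eta>\<in>reach N. P N \<eta> t)"

text \<open>Bound on the jump rate after N jumps (the area is at most N).\<close>
definition rate_bound :: "nat \<Rightarrow> real" where
  "rate_bound N = 2 * sqrt (real N) + 1"

text \<open>Growth constants of the level masses, chosen so that rate_bound N * mass_const N <= mass_const (N+1).\<close>
definition mass_const :: "nat \<Rightarrow> real" where
  "mass_const N = 3 ^ N * sqrt (fact N)"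

text \<open>Bound on the mass still missing from the truncation at N+1 levels.\<close>
definition mass_defect :: "nat \<Rightarrow> real \<Rightarrow> real" where
  "mass_defect N t = rate_bound N * mass_const N * t ^ Suc N / fact N"

lemma level_mass_expect: "level_mass N t = expect (Suc N) t (\<lambda>_. 1) - expect N t (\<lambda>_. 1)"
  by (simp add: level_mass_def expect_def)

lemma q_reach: "\<eta> \<in> reach N \<Longrightarrow> q \<eta> \<le> rate_bound N"
proof -
  assume h: "\<eta> \<in> reach N"
  then have "\<eta> \<in> U0" using reach_U0 by blast
  then have "q \<eta> \<le> 2 * sqrt (real_of_int (area \<eta>)) + 1" by (rule q_area)
  also have "\<dots> \<le> rate_bound N" unfolding rate_bound_def using reach_area[OF h] by simp
  finally show ?thesis .
qed

lemma outflow_one_le: "outflow N t (\<lambda>_. 1) \<le> rate_bound N * level_mass N t"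
  unfolding outflow_def level_mass_def sum_distrib_left
  by (intro sum_mono) (simp add: mult.commute[of "rate_bound N"] mult_left_mono q_reach pn_nonneg)

lemma level_mass_deriv:
  "0 < t \<Longrightarrow> (level_mass (Suc N) has_real_derivative
                (outflow N t (\<lambda>_. 1) - outflow (Suc N) t (\<lambda>_. 1))) (at t)"
proof -
  assume t: "0 < t"
  have "((\<lambda>t. expect (Suc (Suc N)) t (\<lambda>_. 1) - expect (Suc N) t (\<lambda>_. 1)) has_real_derivative
     ((expect (Suc N) t (gen (\<lambda>_. 1)) - outflow (Suc N) t (\<lambda>_. 1)) -
      (expect N t (gen (\<lambda>_. 1)) - outflow N t (\<lambda>_. 1)))) (at t)"
    by (intro DERIV_diff expect_deriv t)
  moreover have "level_mass (Suc N) = (\<lambda>t. expect (Suc (Suc N)) t (\<lambda>_. 1) - expect (Suc N) t (\<lambda>_. 1))"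
    by (rule ext) (simp add: level_mass_expect)
  ultimately show ?thesis by (simp add: gen_const expect_def)
qed

lemma rate_bound_mass_const: "rate_bound N * mass_const N \<le> mass_const (Suc N)"
proof -
  have "2 * sqrt (real N) + 1 \<le> 3 * sqrt (real N + 1)"
    using real_sqrt_le_mono[of "real N" "real N + 1"] real_sqrt_ge_one[of "real N + 1"] by linarith
  moreover have "sqrt (fact (Suc N)) = sqrt (real N + 1) * sqrt (fact N)"
    by (simp add: real_sqrt_mult[symmetric] algebra_simps)
  ultimately have "(2 * sqrt (real N) + 1) * mass_const N \<le> 3 * sqrt (real N + 1) * mass_const N"
    by (intro mult_right_mono) (auto simp: mass_const_def)
  also have "\<dots> = mass_const (Suc N)"
    unfolding mass_const_def using \<open>sqrt (fact (Suc N)) = _\<close> by simp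
  finally show ?thesis unfolding rate_bound_def .
qed

lemma level_mass_bound: "0 \<le> t \<Longrightarrow> level_mass N t \<le> mass_const N * t ^ N / fact N"
proof (induction N arbitrary: t)
  case 0
  then show ?case using expect_one_le[of t 1] by (simp add: level_mass_expect expect_0 mass_const_def)
next
  case (Suc N)
  let ?bound = "\<lambda>s. mass_const (Suc N) * s ^ Suc N / fact (Suc N)"
  have "level_mass (Suc N) t - level_mass (Suc N) 0 \<le> ?bound t - ?bound 0"
  proof (rule deriv_compare[OF Suc.prems])
    show "continuous_on {0..t} (level_mass (Suc N))"
      unfolding level_mass_def by (intro continuous_intros pn_cont)
    show "continuous_on {0..t} ?bound" by (intro continuous_intros) auto
    fix s :: real assume s: "0 < s" "s < t"
    show "(level_mass (Suc N) has_real_derivative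
           (outflow N s (\<lambda>_. 1) - outflow (Suc N) s (\<lambda>_. 1))) (at s)"
      using level_mass_deriv s by blast
    have "(?bound has_real_derivative
           mass_const (Suc N) * (real (Suc N) * s ^ (Suc N - Suc 0)) / fact (Suc N)) (at s)"
      by (intro DERIV_cdivide DERIV_cmult DERIV_pow)
    then show "(?bound has_real_derivative mass_const (Suc N) * s ^ N / fact N) (at s)"
      by (simp add: fact_Suc del: of_nat_Suc)
    have "outflow N s (\<lambda>_. 1) - outflow (Suc N) s (\<lambda>_. 1) \<le> outflow N s (\<lambda>_. 1)"
      using outflow_nonneg[of "\<lambda>_. 1" "Suc N" s] by simp
    also have "\<dots> \<le> rate_bound N * level_mass N s" by (rule outflow_one_le)
    also have "\<dots> \<le> rate_bound N * (mass_const N * s ^ N / fact N)"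
      using Suc.IH[of s] s by (intro mult_left_mono) (auto simp: rate_bound_def)
    also have "\<dots> \<le> mass_const (Suc N) * s ^ N / fact N"
      using rate_bound_mass_const[of N] s
      by (simp add: divide_right_mono mult_right_mono mult.assoc[symmetric])
    finally show "outflow N s (\<lambda>_. 1) - outflow (Suc N) s (\<lambda>_. 1) \<le> mass_const (Suc N) * s ^ N / fact N" .
  qed
  moreover have "level_mass (Suc N) 0 = 0" by (simp add: level_mass_def pn_at0)
  ultimately show ?case by simp
qed

lemma mass_defect_mono: "0 \<le> s \<Longrightarrow> s \<le> t \<Longrightarrow> mass_defect N s \<le> mass_defect N t"
  unfolding mass_defect_def
  by (intro divide_right_mono mult_left_mono power_mono) (auto simp: rate_bound_def mass_const_def)

lemma expect_one_ge: "0 \<le> t \<Longrightarrow> 1 - mass_defect N t \<le> expect (Suc N) t (\<lambda>_. 1)"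
proof -
  assume t: "0 \<le> t"
  define c where "c = rate_bound N * mass_const N * t ^ N / fact N"
  have "(\<lambda>s. - expect (Suc N) s (\<lambda>_. 1)) t - (\<lambda>s. - expect (Suc N) s (\<lambda>_. 1)) 0 \<le>
        (\<lambda>s. c * s) t - (\<lambda>s. c * s) 0"
  proof (rule deriv_compare[OF t])
    show "continuous_on {0..t} (\<lambda>s. - expect (Suc N) s (\<lambda>_. 1))"
      by (intro continuous_intros expect_cont)
    show "continuous_on {0..t} (\<lambda>s. c * s)" by (intro continuous_intros)
    fix s :: real assume s: "0 < s" "s < t"
    show "((\<lambda>s. - expect (Suc N) s (\<lambda>_. 1)) has_real_derivative
           - (expect N s (gen (\<lambda>_. 1)) - outflow N s (\<lambda>_. 1))) (at s)"
      by (intro DERIV_minus expect_deriv s)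
    show "((\<lambda>s. c * s) has_real_derivative c) (at s)" by (auto intro!: derivative_eq_intros)
    have "- (expect N s (gen (\<lambda>_. 1)) - outflow N s (\<lambda>_. 1)) = outflow N s (\<lambda>_. 1)"
      by (simp add: gen_const expect_def)
    also have "\<dots> \<le> rate_bound N * level_mass N s" by (rule outflow_one_le)
    also have "\<dots> \<le> rate_bound N * (mass_const N * s ^ N / fact N)"
      using level_mass_bound[of s N] s by (intro mult_left_mono) (auto simp: rate_bound_def)
    also have "\<dots> \<le> c" unfolding c_def using s
      by (auto simp: rate_bound_def mass_const_def mult.assoc intro!: mult_left_mono divide_right_mono power_mono)
    finally show "- (expect N s (gen (\<lambda>_. 1)) - outflow N s (\<lambda>_. 1)) \<le> c" .
  qed
  then show ?thesis using expect_at0[of N "\<lambda>_. 1"] by (simp add: c_def mass_defect_def algebra_simps)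
qed

text \<open>x^n / sqrt (n!) tends to 0, being the square root of a term of the exponential series.\<close>
lemma pow_over_sqrt_fact_zero:
  fixes x :: real
  assumes "0 \<le> x"
  shows "(\<lambda>n. x ^ n / sqrt (fact n)) \<longlonglongrightarrow> 0"
proof -
  have "(\<lambda>n. (x\<^sup>2) ^ n / fact n) \<longlonglongrightarrow> 0"
    using summable_LIMSEQ_zero[OF summable_exp[of "x\<^sup>2"]] by (simp add: field_simps)
  then have "(\<lambda>n. sqrt ((x\<^sup>2) ^ n / fact n)) \<longlonglongrightarrow> sqrt 0" by (rule tendsto_real_sqrt)
  moreover have "sqrt ((x\<^sup>2) ^ n / fact n) = x ^ n / sqrt (fact n)" for n
    using assms by (simp add: real_sqrt_divide power_even_eq[symmetric] power_mult real_sqrt_power)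
  ultimately show ?thesis by simp
qed

lemma mass_defect_zero:
  assumes t: "0 \<le> t"
  shows "(\<lambda>N. mass_defect N t) \<longlonglongrightarrow> 0"
proof (rule Lim_null_comparison)
  show "(\<lambda>N. 3 * t * ((6 * t) ^ N / sqrt (fact N))) \<longlonglongrightarrow> 0"
    using tendsto_mult_right_zero[OF pow_over_sqrt_fact_zero[of "6 * t"]] t by simp
  show "\<forall>\<^sub>F N in sequentially. norm (mass_defect N t) \<le> 3 * t * ((6 * t) ^ N / sqrt (fact N))"
  proof (rule always_eventually, rule allI)
    fix N
    have "real N \<le> (2 ^ N)\<^sup>2"
    proof -
      have "real N \<le> 2 ^ N" using of_nat_less_imp_less less_exp[of N] by (simp add: less_imp_le)
      also have "(2::real) ^ N \<le> (2 ^ N)\<^sup>2" by (simp add: power2_eq_square)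
      finally show ?thesis .
    qed
    then have "sqrt (real N) \<le> 2 ^ N" by (intro real_le_lsqrt) auto
    then have rate: "rate_bound N \<le> 3 * 2 ^ N"
      unfolding rate_bound_def using one_le_power[of "2::real" N] by linarith
    have fact: "mass_const N / fact N = 3 ^ N / sqrt (fact N)"
    proof -
      have "(fact N :: real) = sqrt (fact N) * sqrt (fact N)" by simp
      then show ?thesis unfolding mass_const_def by (simp add: field_simps)
    qed
    have "0 \<le> mass_defect N t"
      using t by (simp add: mass_defect_def rate_bound_def mass_const_def)
    then have "norm (mass_defect N t) = mass_defect N t" by simp
    also have "\<dots> = rate_bound N * t * t ^ N * (mass_const N / fact N)"
      by (simp add: mass_defect_def)
    also have "\<dots> = rate_bound N * t * (3 * t) ^ N / sqrt (fact N)"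
      unfolding fact by (simp add: power_mult_distrib)
    also have "\<dots> \<le> 3 * 2 ^ N * t * (3 * t) ^ N / sqrt (fact N)"
      using rate t by (intro divide_right_mono mult_right_mono) auto
    also have "\<dots> = 3 * t * ((6 * t) ^ N / sqrt (fact N))"
    proof -
      have "(2::real) ^ N * 3 ^ N = 6 ^ N" by (simp add: power_mult_distrib[symmetric])
      then show ?thesis by (simp add: power_mult_distrib)
    qed
    finally show "norm (mass_defect N t) \<le> 3 * t * ((6 * t) ^ N / sqrt (fact N))" .
  qed
qed

section \<open>Concentration of the area\<close>

definition areaR :: "config \<Rightarrow> real" where
  "areaR \<eta> = real_of_int (area \<eta>)"

lemma areaR_nonneg: "\<eta> \<in> U0 \<Longrightarrow> 0 \<le> areaR \<eta>"
  using area_nonneg by (simp add: areaR_def)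

lemma areaR_swp: "\<zeta> \<in> U0 \<Longrightarrow> x \<in> bonds \<zeta> \<Longrightarrow> areaR (swp \<zeta> x) = areaR \<zeta> + bond_sign \<zeta> x"
  using U0_swp[of \<zeta> x] by (simp add: areaR_def)

lemma bond_sign_sq: "x \<in> bonds \<zeta> \<Longrightarrow> (real_of_int (bond_sign \<zeta> x))\<^sup>2 = 1"
  by (auto simp: bond_sign_def bonds_def)

lemma sum_bond_sign_real: "\<zeta> \<in> U0 \<Longrightarrow> (\<Sum>x\<in>bonds \<zeta>. real_of_int (bond_sign \<zeta> x)) = 1"
  using sum_bond_sign[of \<zeta>] by (metis of_int_1 of_int_sum)

lemma gen_area: "\<zeta> \<in> U0 \<Longrightarrow> gen areaR \<zeta> = 1/2"
proof -
  assume u: "\<zeta> \<in> U0"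
  have "(\<Sum>x\<in>bonds \<zeta>. areaR (swp \<zeta> x) - areaR \<zeta>) = (\<Sum>x\<in>bonds \<zeta>. real_of_int (bond_sign \<zeta> x))"
    by (intro sum.cong refl) (simp add: areaR_swp[OF u])
  then show ?thesis using sum_bond_sign_real[OF u] by (simp add: gen_def)
qed

lemma gen_area_sq: "\<zeta> \<in> U0 \<Longrightarrow> gen (\<lambda>\<eta>. (areaR \<eta> - c)\<^sup>2) \<zeta> = areaR \<zeta> - c + q \<zeta>"
proof -
  assume u: "\<zeta> \<in> U0"
  have "(\<Sum>x\<in>bonds \<zeta>. (areaR (swp \<zeta> x) - c)\<^sup>2 - (areaR \<zeta> - c)\<^sup>2) =
        (\<Sum>x\<in>bonds \<zeta>. 2 * (areaR \<zeta> - c) * real_of_int (bond_sign \<zeta> x) + 1)"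
  proof (intro sum.cong refl)
    fix x assume x: "x \<in> bonds \<zeta>"
    show "(areaR (swp \<zeta> x) - c)\<^sup>2 - (areaR \<zeta> - c)\<^sup>2 =
          2 * (areaR \<zeta> - c) * real_of_int (bond_sign \<zeta> x) + 1"
      using areaR_swp[OF u x] bond_sign_sq[OF x] by (simp add: power2_eq_square algebra_simps)
  qed
  also have "\<dots> = 2 * (areaR \<zeta> - c) + real (card (bonds \<zeta>))"
    by (simp add: sum.distrib sum_distrib_left[symmetric] sum_bond_sign_real[OF u])
  finally show ?thesis by (simp add: gen_def qtot_half[OF u])
qed

lemma expect_area_le: "0 \<le> t \<Longrightarrow> expect N t areaR \<le> t / 2"
proof (cases N)
  case 0 assume "0 \<le> t" then show ?thesis using 0 by (simp add: expect_0)
next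
  case (Suc M)
  assume t: "0 \<le> t"
  have "expect (Suc M) t areaR - expect (Suc M) 0 areaR \<le> (\<lambda>s. s / 2) t - (\<lambda>s. s / 2) 0"
  proof (rule deriv_compare[OF t expect_cont])
    show "continuous_on {0..t} (\<lambda>s. s / 2)" by (intro continuous_intros) auto
    fix s :: real assume s: "0 < s" "s < t"
    show "((\<lambda>t. expect (Suc M) t areaR) has_real_derivative
           (expect M s (gen areaR) - outflow M s areaR)) (at s)"
      using expect_deriv s by blast
    show "((\<lambda>s. s / 2) has_real_derivative 1 / 2) (at s)" by (auto intro!: derivative_eq_intros)
    have "expect M s (gen areaR) - outflow M s areaR \<le> expect M s (gen areaR)"
      using outflow_nonneg[of areaR] areaR_nonneg by auto
    also have "\<dots> = expect M s (\<lambda>_. 1/2 * 1)"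
      unfolding expect_def using reach_U0 gen_area by (intro sum.cong refl) auto
    also have "\<dots> \<le> 1/2" by (subst expect_cmult) (use expect_one_le[of s M] s in simp)
    finally show "expect M s (gen areaR) - outflow M s areaR \<le> 1 / 2" .
  qed
  then show ?thesis using Suc expect_at0[of M areaR] by (simp add: areaR_def area_Ostep)
qed

text \<open>Linearised rate bound: q <= A/a + a + 1 for every a > 0 (from q <= 2 sqrt A + 1).\<close>
lemma q_le_area: "\<eta> \<in> U0 \<Longrightarrow> 0 < a \<Longrightarrow> q \<eta> \<le> areaR \<eta> / a + a + 1"
proof -
  assume u: "\<eta> \<in> U0" and a: "0 < a"
  have A: "0 \<le> areaR \<eta>" using areaR_nonneg[OF u] .
  have "0 \<le> (sqrt (areaR \<eta>) - a)\<^sup>2" by simp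
  then have "2 * a * sqrt (areaR \<eta>) \<le> areaR \<eta> + a\<^sup>2"
    using A by (simp add: power2_eq_square algebra_simps)
  then have "2 * sqrt (areaR \<eta>) \<le> areaR \<eta> / a + a" using a by (simp add: field_simps power2_eq_square)
  then show ?thesis using q_area[OF u] by (simp add: areaR_def)
qed

lemma area_sq_drift:
  assumes s: "0 < s" "s \<le> t" and c: "0 \<le> c" and a: "0 < a"
  defines "f \<equiv> \<lambda>\<eta>. (areaR \<eta> - c)\<^sup>2"
  shows "expect (Suc N) s (gen f) - outflow (Suc N) s f \<le>
         s / 2 + (- c + c * mass_defect N t + t / (2 * a) + a + 1)"
proof -
  have mass_lo: "1 - mass_defect N t \<le> expect (Suc N) s (\<lambda>_. 1)"
    using expect_one_ge[of s N] mass_defect_mono[of s t N] s by simp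
  have mass_hi: "expect (Suc N) s (\<lambda>_. 1) \<le> 1" using expect_one_le[of s] s by simp
  have area: "(1 + 1 / a) * expect (Suc N) s areaR \<le> (1 + 1 / a) * (s / 2)"
    using expect_area_le[of s] s a by (intro mult_left_mono) auto
  have "expect (Suc N) s (gen f) - outflow (Suc N) s f \<le> expect (Suc N) s (gen f)"
    using outflow_nonneg[of f] by (auto simp: f_def)
  also have "\<dots> \<le> expect (Suc N) s (\<lambda>\<eta>. areaR \<eta> - c + (areaR \<eta> / a + a + 1))"
    by (rule expect_mono) (simp add: f_def gen_area_sq q_le_area a)
  also have "\<dots> = (1 + 1 / a) * expect (Suc N) s areaR - (c - (a + 1)) * expect (Suc N) s (\<lambda>_. 1)"
    by (simp add: expect_def algebra_simps sum.distrib sum_subtractf sum_distrib_left add_divide_distrib)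
  also have "\<dots> \<le> (1 + 1 / a) * (s / 2) - c * (1 - mass_defect N t) + (a + 1)"
  proof -
    have "(a + 1) * expect (Suc N) s (\<lambda>_. 1) \<le> a + 1" using mass_hi a by simp
    then show ?thesis using area mult_left_mono[OF mass_lo c]
      by (simp only: left_diff_distrib)
  qed
  also have "\<dots> \<le> s / 2 + (- c + c * mass_defect N t + t / (2 * a) + a + 1)"
    using s a by (simp add: field_simps)
  finally show ?thesis .
qed

lemma expect_area_sq_le:
  assumes t: "0 \<le> t" and c: "0 \<le> c" and a: "0 < a"
  shows "expect (Suc (Suc N)) t (\<lambda>\<eta>. (areaR \<eta> - c)\<^sup>2) \<le>
    c\<^sup>2 + t\<^sup>2 / 4 + (- c + c * mass_defect N t + t / (2 * a) + a + 1) * t"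
proof -
  define K where "K = - c + c * mass_defect N t + t / (2 * a) + a + 1"
  let ?f = "\<lambda>\<eta>. (areaR \<eta> - c)\<^sup>2"
  have "expect (Suc (Suc N)) t ?f - expect (Suc (Suc N)) 0 ?f \<le>
        (\<lambda>s. s\<^sup>2 / 4 + K * s) t - (\<lambda>s. s\<^sup>2 / 4 + K * s) 0"
  proof (rule deriv_compare[OF t expect_cont])
    show "continuous_on {0..t} (\<lambda>s. s\<^sup>2 / 4 + K * s)" by (intro continuous_intros) auto
    fix s :: real assume s: "0 < s" "s < t"
    show "((\<lambda>t. expect (Suc (Suc N)) t ?f) has_real_derivative
           (expect (Suc N) s (gen ?f) - outflow (Suc N) s ?f)) (at s)"
      using expect_deriv s by blast
    show "((\<lambda>s. s\<^sup>2 / 4 + K * s) has_real_derivative s / 2 + K) (at s)"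
      by (auto intro!: derivative_eq_intros)
    show "expect (Suc N) s (gen ?f) - outflow (Suc N) s ?f \<le> s / 2 + K"
      unfolding K_def using area_sq_drift[OF s(1) _ c a] s by simp
  qed
  then show ?thesis using expect_at0[of "Suc N" ?f] by (simp add: areaR_def area_Ostep K_def)
qed

lemma chebyshev:
  assumes d: "0 < d"
  shows "expect N t (\<lambda>\<eta>. if c + d < areaR \<eta> then 1 else 0) \<le>
         expect N t (\<lambda>\<eta>. (areaR \<eta> - c)\<^sup>2) / d\<^sup>2"
proof -
  have "expect N t (\<lambda>\<eta>. if c + d < areaR \<eta> then 1 else 0) \<le>
        expect N t (\<lambda>\<eta>. (1 / d\<^sup>2) * (areaR \<eta> - c)\<^sup>2)"
  proof (rule expect_mono)
    fix \<eta> :: config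
    show "(if c + d < areaR \<eta> then 1 else 0) \<le> 1 / d\<^sup>2 * (areaR \<eta> - c)\<^sup>2"
    proof (cases "c + d < areaR \<eta>")
      case True
      then have "d\<^sup>2 \<le> (areaR \<eta> - c)\<^sup>2" using d by (intro power_mono) auto
      then show ?thesis using True d by (simp add: field_simps)
    qed simp
  qed
  also have "\<dots> = expect N t (\<lambda>\<eta>. (areaR \<eta> - c)\<^sup>2) / d\<^sup>2"
    by (subst expect_cmult) simp
  finally show ?thesis .
qed

section \<open>From truncated expectations to the probabilities prob_in\<close>

lemma sum_le_level_mass: "finite S \<Longrightarrow> (\<Sum>\<eta>\<in>S. P n \<eta> t) \<le> level_mass n t"
proof -
  assume S: "finite S"
  have "(\<Sum>\<eta>\<in>S. P n \<eta> t) = (\<Sum>\<eta>\<in>S \<inter> reach n. P n \<eta> t)"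
    using S by (intro sum.mono_neutral_right) (auto simp: pn_zero)
  also have "\<dots> \<le> level_mass n t"
    unfolding level_mass_def using reach_finite by (intro sum_mono2) (auto simp: pn_nonneg)
  finally show ?thesis .
qed

lemma partial_sum_le_one: "0 \<le> t \<Longrightarrow> finite S \<Longrightarrow> (\<Sum>n<N. \<Sum>\<eta>\<in>S. P n \<eta> t) \<le> 1"
proof -
  assume t: "0 \<le> t" and S: "finite S"
  have "(\<Sum>n<N. \<Sum>\<eta>\<in>S. P n \<eta> t) \<le> (\<Sum>n<N. level_mass n t)"
    by (intro sum_mono sum_le_level_mass S)
  also have "\<dots> = expect N t (\<lambda>_. 1)" by (simp add: expect_def level_mass_def)
  also have "\<dots> \<le> 1" using expect_one_le t by simp
  finally show ?thesis .
qed

lemma summable_level_sums: "0 \<le> t \<Longrightarrow> finite S \<Longrightarrow> summable (\<lambda>n. \<Sum>\<eta>\<in>S. P n \<eta> t)"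
  using partial_sum_le_one[of t S]
  by (intro summableI_nonneg_bounded[of _ 1]) (auto simp: pn_nonneg sum_nonneg)

lemma summable_pn: "0 \<le> t \<Longrightarrow> summable (\<lambda>n. P n \<eta> t)"
  using summable_level_sums[of t "{\<eta>}"] by simp

lemma prob_in_eq: "0 \<le> t \<Longrightarrow> finite S \<Longrightarrow> prob_in (1/2) t S = (\<Sum>n. \<Sum>\<eta>\<in>S. P n \<eta> t)"
  unfolding prob_in_def trans_prob_def
  by (simp add: suminf_sum summable_pn)

lemma prob_in_le1: "0 \<le> t \<Longrightarrow> finite S \<Longrightarrow> prob_in (1/2) t S \<le> 1"
  by (simp add: prob_in_eq suminf_le_const summable_level_sums partial_sum_le_one)

lemma expect_low_area_le_prob_in:
  assumes t: "0 \<le> t" and S: "finite S" and sub: "{\<eta>\<in>U0. areaR \<eta> \<le> b} \<subseteq> S"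
  shows "expect N t (\<lambda>\<eta>. if b < areaR \<eta> then 0 else 1) \<le> prob_in (1/2) t S"
proof -
  have "expect N t (\<lambda>\<eta>. if b < areaR \<eta> then 0 else 1) \<le> (\<Sum>n<N. \<Sum>\<eta>\<in>S. P n \<eta> t)"
    unfolding expect_def
  proof (intro sum_mono)
    fix n
    have "(\<Sum>\<eta>\<in>reach n. P n \<eta> t * (if b < areaR \<eta> then 0 else 1)) =
          (\<Sum>\<eta>\<in>reach n \<inter> {\<eta>. areaR \<eta> \<le> b}. P n \<eta> t)"
      using reach_finite by (intro sum.mono_neutral_cong_right) auto
    also have "\<dots> \<le> (\<Sum>\<eta>\<in>S. P n \<eta> t)"
      using sub reach_U0 S by (intro sum_mono2) (auto simp: pn_nonneg)
    finally show "(\<Sum>\<eta>\<in>reach n. P n \<eta> t * (if b < areaR \<eta> then 0 else 1)) \<le> (\<Sum>\<eta>\<in>S. P n \<eta> t)" .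
  qed
  also have "\<dots> \<le> (\<Sum>n. \<Sum>\<eta>\<in>S. P n \<eta> t)"
    by (intro sum_le_suminf summable_level_sums t S) (auto simp: sum_nonneg pn_nonneg)
  also have "\<dots> = prob_in (1/2) t S" using prob_in_eq t S by simp
  finally show ?thesis .
qed

lemma prob_in_ge:
  assumes t: "0 \<le> t" and S: "finite S" and sub: "{\<eta>\<in>U0. areaR \<eta> \<le> c + d} \<subseteq> S"
    and d: "0 < d" and c: "0 \<le> c" and a: "0 < a"
  shows "1 - mass_defect (Suc N) t
           - (c\<^sup>2 + t\<^sup>2 / 4 + (- c + c * mass_defect N t + t / (2 * a) + a + 1) * t) / d\<^sup>2
         \<le> prob_in (1/2) t S"
proof -
  let ?M = "Suc (Suc N)"
  let ?high = "\<lambda>\<eta>. if c + d < areaR \<eta> then 1 else (0::real)"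
  have "expect ?M t (\<lambda>_. 1) - expect ?M t ?high = expect ?M t (\<lambda>\<eta>. if c + d < areaR \<eta> then 0 else 1)"
    unfolding expect_diff[symmetric] by (rule arg_cong[where f = "expect ?M t"]) auto
  also have "\<dots> \<le> prob_in (1/2) t S" by (rule expect_low_area_le_prob_in[OF t S sub])
  finally have "expect ?M t (\<lambda>_. 1) - expect ?M t ?high \<le> prob_in (1/2) t S" .
  moreover have "1 - mass_defect (Suc N) t \<le> expect ?M t (\<lambda>_. 1)" using expect_one_ge t by blast
  moreover have "expect ?M t ?high \<le>
      (c\<^sup>2 + t\<^sup>2 / 4 + (- c + c * mass_defect N t + t / (2 * a) + a + 1) * t) / d\<^sup>2"
    using chebyshev[OF d, of ?M t c] expect_area_sq_le[OF t c a, of N] d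
    by (smt (verit, best) divide_right_mono zero_le_power2)
  ultimately show ?thesis by linarith
qed

section \<open>Counting configurations of bounded area\<close>

lemma neg_ln_sums:
  fixes u :: real
  assumes "0 \<le> u" "u < 1"
  shows "(\<lambda>n. u ^ Suc n / real (Suc n)) sums (- ln (1 - u))"
proof -
  have "(\<lambda>n. - ((- (- u)) ^ n) / of_nat n) sums ln (1 + - u)"
    by (rule ln_series') (use assms in simp)
  then have "(\<lambda>n. u ^ n / real n) sums (- ln (1 - u))"
    using sums_minus by fastforce
  then show ?thesis by (subst sums_Suc_iff) simp
qed

lemma ln_1p_sums:
  fixes y :: real
  assumes "0 \<le> y" "y < 1"
  shows "(\<lambda>n. (y ^ Suc n - (y\<^sup>2) ^ Suc n) / real (Suc n)) sums (ln (1 + y))"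
proof -
  have y2: "0 \<le> y\<^sup>2" "y\<^sup>2 < 1" using assms by (auto simp: abs_square_less_1)
  have "(\<lambda>n. y ^ Suc n / real (Suc n) - (y\<^sup>2) ^ Suc n / real (Suc n)) sums
        (- ln (1 - y) - - ln (1 - y\<^sup>2))"
    by (intro sums_diff neg_ln_sums assms y2)
  moreover have "ln (1 - y\<^sup>2) = ln (1 - y) + ln (1 + y)"
  proof -
    have "1 - y\<^sup>2 = (1 - y) * (1 + y)" by (simp add: power2_eq_square algebra_simps)
    then show ?thesis using assms by (simp add: ln_mult)
  qed
  ultimately show ?thesis by (simp add: diff_divide_distrib)
qed

lemma geo_diff_bound:
  fixes z :: real
  assumes "0 \<le> z" "z < 1"
  shows "(\<Sum>k=1..m. z ^ k - (z\<^sup>2) ^ k) \<le> z / (1 - z\<^sup>2)"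
proof -
  have closed_form: "(1 - z\<^sup>2) * (\<Sum>k=1..m. z ^ k - (z\<^sup>2) ^ k) = z - z ^ Suc m * (1 + z - z ^ Suc m)"
    for m
  proof (induction m)
    case (Suc m)
    have "(1 - z\<^sup>2) * (\<Sum>k=1..Suc m. z ^ k - (z\<^sup>2) ^ k) =
          z - z ^ Suc m * (1 + z - z ^ Suc m) + (1 - z\<^sup>2) * (z ^ Suc m - (z\<^sup>2) ^ Suc m)"
      using Suc by (simp add: distrib_left)
    also have "\<dots> = z - z ^ Suc (Suc m) * (1 + z - z ^ Suc (Suc m))"
      by (simp add: power2_eq_square power_mult_distrib algebra_simps power_mult[symmetric])
    finally show ?case .
  qed simp
  have "z ^ Suc m \<le> 1" using assms by (intro power_le_one) auto
  then have "0 \<le> z ^ Suc m * (1 + z - z ^ Suc m)"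
    using assms by (intro mult_nonneg_nonneg) auto
  then have "(1 - z\<^sup>2) * (\<Sum>k=1..m. z ^ k - (z\<^sup>2) ^ k) \<le> z" using closed_form[of m] by simp
  moreover have "z\<^sup>2 < 1" using assms by (simp add: abs_square_less_1)
  ultimately show ?thesis by (simp add: field_simps)
qed

lemma sinh_lower: "0 \<le> (u::real) \<Longrightarrow> 2 * u \<le> exp u - exp (- u)"
proof -
  assume u: "0 \<le> u"
  have "(\<lambda>x. exp x - exp (- x) - 2 * x) 0 \<le> (\<lambda>x. exp x - exp (- x) - 2 * x) u"
  proof (rule DERIV_nonneg_imp_increasing_open[of 0 u])
    fix x :: real
    have "0 \<le> (exp (x/2) - exp (- x/2))\<^sup>2" by simp
    then have "0 \<le> exp x + exp (- x) - 2"
      by (simp add: power2_eq_square algebra_simps mult_exp_exp)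
    moreover have "((\<lambda>x. exp x - exp (- x) - 2 * x) has_real_derivative exp x + exp (- x) - 2) (at x)"
      by (auto intro!: derivative_eq_intros)
    ultimately show "\<exists>y. ((\<lambda>x. exp x - exp (- x) - 2 * x) has_real_derivative y) (at x) \<and> 0 \<le> y"
      by blast
  qed (use u in \<open>auto intro!: continuous_intros\<close>)
  then show ?thesis by simp
qed

lemma exp_geo_diff_bound:
  fixes s j :: real
  assumes s: "0 < s" and j: "0 < j"
  shows "(\<Sum>k=1..m. exp (- s * j) ^ k - ((exp (- s * j))\<^sup>2) ^ k) \<le> 1 / (2 * (s * j))"
proof -
  define X where "X = exp (s * j)"
  have X: "1 < X" unfolding X_def using mult_pos_pos[OF s j] by simp
  have z: "exp (- s * j) = 1 / X" by (simp add: X_def exp_minus field_simps)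
  have "(\<Sum>k=1..m. exp (- s * j) ^ k - ((exp (- s * j))\<^sup>2) ^ k) \<le> exp (- s * j) / (1 - (exp (- s * j))\<^sup>2)"
    by (rule geo_diff_bound) (use s j in auto)
  also have "\<dots> = 1 / (exp (s * j) - exp (- s * j))"
    unfolding z X_def[symmetric] using X by (simp add: field_simps power2_eq_square)
  also have "\<dots> \<le> 1 / (2 * (s * j))"
    using sinh_lower[of "s * j"] s j by (intro divide_left_mono) auto
  finally show ?thesis .
qed

lemma sum_ln_1p_exp:
  fixes s :: real
  assumes s: "0 < s"
  shows "(\<Sum>k=1..m. ln (1 + exp (- s * real k))) \<le> pi\<^sup>2 / (12 * s)"
proof -
  define f where
    "f = (\<lambda>k n. ((exp (- s * real k)) ^ Suc n - ((exp (- s * real k))\<^sup>2) ^ Suc n) / real (Suc n))"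
  have "f k sums ln (1 + exp (- s * real k))" if "k \<in> {1..m}" for k
    unfolding f_def using that s by (intro ln_1p_sums) auto
  then have lhs: "(\<lambda>n. \<Sum>k=1..m. f k n) sums (\<Sum>k=1..m. ln (1 + exp (- s * real k)))"
    by (rule sums_sum)
  have rhs: "(\<lambda>n. 1 / (2 * s) * (1 / real (Suc n))\<^sup>2) sums (1 / (2 * s) * (pi\<^sup>2 / 6))"
    using sums_mult[OF inverse_squares_sums, of "1 / (2 * s)"] by (simp add: power_divide)
  have "(\<Sum>k=1..m. f k n) \<le> 1 / (2 * s) * (1 / real (Suc n))\<^sup>2" for n
  proof -
    define j where "j = real (Suc n)"
    have j: "0 < j" by (simp add: j_def)
    have pw: "(exp (- s * real k)) ^ Suc n = exp (- s * j) ^ k" for k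
    proof -
      have "(exp (- s * real k)) ^ Suc n = exp (real (Suc n) * (- s * real k))"
        by (rule exp_of_nat_mult[symmetric])
      also have "\<dots> = exp (real k * (- s * j))" by (simp add: j_def algebra_simps)
      also have "\<dots> = exp (- s * j) ^ k" by (rule exp_of_nat_mult)
      finally show ?thesis .
    qed
    have pw2: "((exp (- s * real k))\<^sup>2) ^ Suc n = ((exp (- s * j))\<^sup>2) ^ k" for k
      by (metis pw power_mult mult.commute)
    have "(\<Sum>k=1..m. f k n) = (\<Sum>k=1..m. exp (- s * j) ^ k - ((exp (- s * j))\<^sup>2) ^ k) / j"
      unfolding f_def sum_divide_distrib[symmetric] j_def[symmetric] pw pw2 ..
    also have "\<dots> \<le> 1 / (2 * (s * j)) / j"
      using exp_geo_diff_bound[OF s j] j by (intro divide_right_mono) auto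
    also have "\<dots> = 1 / (2 * s) * (1 / j)\<^sup>2" by (simp add: power2_eq_square)
    finally show ?thesis by (simp add: j_def)
  qed
  then have "(\<Sum>k=1..m. ln (1 + exp (- s * real k))) \<le> 1 / (2 * s) * (pi\<^sup>2 / 6)"
    by (rule sums_le[OF _ lhs rhs])
  then show ?thesis by simp
qed

definition low_area :: "real \<Rightarrow> config set" where
  "low_area M = {\<eta>\<in>U0. areaR \<eta> \<le> M}"

definition encode :: "config \<Rightarrow> nat set \<times> nat set" where
  "encode \<eta> = (nat ` occ_right \<eta>, (\<lambda>z. nat (- z)) ` holes_left \<eta>)"

lemma inj_encode: "inj encode"
proof (rule injI)
  fix \<eta> \<eta>' assume e: "encode \<eta> = encode \<eta>'"
  have right: "occ_right \<xi> = int ` fst (encode \<xi>)" for \<xi>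
  proof -
    have "int ` fst (encode \<xi>) = (\<lambda>y. int (nat y)) ` occ_right \<xi>" by (simp add: encode_def image_image)
    also have "\<dots> = occ_right \<xi>" by (rule image_cong_simp[where g = id, simplified]) (auto simp: occ_right_def)
    finally show ?thesis by simp
  qed
  have left: "holes_left \<xi> = (\<lambda>k. - int k) ` snd (encode \<xi>)" for \<xi>
  proof -
    have "(\<lambda>k. - int k) ` snd (encode \<xi>) = (\<lambda>z. - int (nat (- z))) ` holes_left \<xi>"
      by (simp add: encode_def image_image)
    also have "\<dots> = holes_left \<xi>" by (rule image_cong_simp[where g = id, simplified]) (auto simp: holes_left_def)
    finally show ?thesis by simp
  qed
  have "occ_right \<eta> = occ_right \<eta>'" "holes_left \<eta> = holes_left \<eta>'"
    using right[of \<eta>] right[of \<eta>'] left[of \<eta>] left[of \<eta>'] e by simp_all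
  then show "\<eta> = \<eta>'"
    by (intro ext) (metis (mono_tags) mem_Collect_eq not_le occ_right_def holes_left_def)
qed

lemma area_encode: "areaR \<eta> = real (\<Sum>(fst (encode \<eta>))) + real (\<Sum>(snd (encode \<eta>)))"
proof -
  have inj_right: "inj_on nat (occ_right \<eta>)" by (auto simp: inj_on_def occ_right_def)
  have inj_left: "inj_on (\<lambda>z. nat (- z)) (holes_left \<eta>)" by (auto simp: inj_on_def holes_left_def)
  have "real (\<Sum>(nat ` occ_right \<eta>)) = (\<Sum>y\<in>occ_right \<eta>. real_of_int y)"
    by (simp add: sum.reindex[OF inj_right]) (intro sum.cong, auto simp: occ_right_def)
  moreover have "real (\<Sum>((\<lambda>z. nat (- z)) ` holes_left \<eta>)) = (\<Sum>z\<in>holes_left \<eta>. real_of_int (- z))"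
    by (simp add: sum.reindex[OF inj_left]) (intro sum.cong, auto simp: holes_left_def)
  ultimately show ?thesis unfolding encode_def areaR_def area_def by simp
qed

definition bounded_pairs :: "real \<Rightarrow> nat \<Rightarrow> (nat set \<times> nat set) set" where
  "bounded_pairs M m = {(S, T). S \<subseteq> {0..m} \<and> T \<subseteq> {1..m} \<and> real (\<Sum>S) + real (\<Sum>T) \<le> M}"

text \<open>All encoded positions are at most the area, hence at most floor M.\<close>
lemma encode_low_area:
  assumes "\<eta> \<in> low_area M"
  shows "encode \<eta> \<in> bounded_pairs M (nat \<lfloor>M\<rfloor>)"
proof -
  have u: "\<eta> \<in> U0" and A: "areaR \<eta> \<le> M" using assms by (auto simp: low_area_def)
  have sum_le: "real (\<Sum>(fst (encode \<eta>))) + real (\<Sum>(snd (encode \<eta>))) \<le> M"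
    using area_encode[of \<eta>] A by simp
  have fin: "finite (fst (encode \<eta>))" "finite (snd (encode \<eta>))"
    using u by (auto simp: U0_iff encode_def)
  have "k \<le> nat \<lfloor>M\<rfloor>" if "k \<in> fst (encode \<eta>) \<union> snd (encode \<eta>)" for k
  proof -
    have "k \<le> \<Sum>(fst (encode \<eta>)) \<or> k \<le> \<Sum>(snd (encode \<eta>))"
      using that fin by (auto intro: member_le_sum)
    then have "real k \<le> M" using sum_le by (auto simp del: of_nat_sum)
    then show ?thesis by (simp add: le_nat_floor le_floor_iff)
  qed
  moreover have "0 \<notin> snd (encode \<eta>)" by (auto simp: encode_def holes_left_def)
  ultimately show ?thesis using sum_le unfolding bounded_pairs_def
    by (cases "encode \<eta>") (auto simp: Suc_le_eq, metis gr0I)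
qed

lemma low_area_finite_card:
  "finite (low_area M) \<and> card (low_area M) \<le> card (bounded_pairs M (nat \<lfloor>M\<rfloor>))"
proof -
  have fin: "finite (bounded_pairs M (nat \<lfloor>M\<rfloor>))"
    by (rule finite_subset[of _ "Pow {0..nat \<lfloor>M\<rfloor>} \<times> Pow {1..nat \<lfloor>M\<rfloor>}"])
       (auto simp: bounded_pairs_def)
  have inj: "inj_on encode (low_area M)" using inj_encode by (rule inj_on_subset) simp
  have sub: "encode ` low_area M \<subseteq> bounded_pairs M (nat \<lfloor>M\<rfloor>)" using encode_low_area by blast
  show ?thesis using finite_imageD[OF finite_subset[OF sub fin] inj] card_inj_on_le[OF inj sub fin]
    by blast
qed

lemma Ostep_low_area: "0 \<le> M \<Longrightarrow> Ostep \<in> low_area M"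
  by (simp add: low_area_def Ostep_U0 areaR_def area_Ostep)

lemma card_low_area_pos: "0 \<le> M \<Longrightarrow> 1 \<le> card (low_area M)"
  using low_area_finite_card[of M] Ostep_low_area[of M]
  by (metis One_nat_def Suc_leI card_gt_0_iff empty_iff)

lemma card_le_weight:
  fixes w :: "'a \<Rightarrow> real"
  assumes "finite U" "W \<subseteq> U" "\<And>x. x \<in> W \<Longrightarrow> 1 \<le> w x" "\<And>x. x \<in> U \<Longrightarrow> 0 \<le> w x"
  shows "real (card W) \<le> (\<Sum>x\<in>U. w x)"
proof -
  have "real (card W) = (\<Sum>x\<in>W. 1)" by simp
  also have "\<dots> \<le> (\<Sum>x\<in>W. w x)" using assms(3) by (rule sum_mono)
  also have "\<dots> \<le> (\<Sum>x\<in>U. w x)" using assms by (intro sum_mono2) auto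
  finally show ?thesis .
qed

lemma sum_pow_exp:
  fixes A :: "nat set"
  assumes "finite A"
  shows "(\<Sum>X\<in>Pow A. exp (- s * real (\<Sum>X))) = (\<Prod>k\<in>A. 1 + exp (- s * real k))"
proof -
  have "(\<Prod>k\<in>A. exp (- s * real k) + 1) =
        (\<Sum>X\<in>Pow A. (\<Prod>k\<in>X. exp (- s * real k)) * (\<Prod>k\<in>A - X. 1))"
    by (rule prod_add[OF assms])
  also have "\<dots> = (\<Sum>X\<in>Pow A. exp (- s * real (\<Sum>X)))"
  proof (intro sum.cong refl)
    fix X assume "X \<in> Pow A"
    then have "finite X" using assms by (auto intro: finite_subset)
    then show "(\<Prod>k\<in>X. exp (- s * real k)) * (\<Prod>k\<in>A - X. 1) = exp (- s * real (\<Sum>X))"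
      by (simp add: exp_sum[symmetric] sum_distrib_left)
  qed
  finally show ?thesis by (simp add: add.commute)
qed

text \<open>Rankin bound with weight exp (s (M - sum S - sum T)); the sum factorises over the elements.\<close>
lemma card_bounded_pairs:
  assumes s: "0 < s"
  shows "real (card (bounded_pairs M m)) \<le> exp (s * M) * (2 * (\<Prod>k=1..m. 1 + exp (- s * real k))\<^sup>2)"
proof -
  let ?F = "\<lambda>S. exp (- s * real (\<Sum>S))"
  let ?U = "Pow {0..m} \<times> Pow {1..m}"
  have "real (card (bounded_pairs M m)) \<le> (\<Sum>(S, T)\<in>?U. exp (s * M) * (?F S * ?F T))"
  proof (rule card_le_weight)
    show "bounded_pairs M m \<subseteq> ?U" by (auto simp: bounded_pairs_def)
    show "1 \<le> (case w of (S, T) \<Rightarrow> exp (s * M) * (?F S * ?F T))"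
      if hw: "w \<in> bounded_pairs M m" for w
    proof -
      obtain S T where w: "w = (S, T)" and le: "real (\<Sum>S) + real (\<Sum>T) \<le> M"
        using hw by (cases w) (auto simp: bounded_pairs_def simp del: of_nat_sum)
      have "0 \<le> s * M + (- s * real (\<Sum>S) + - s * real (\<Sum>T))"
        using mult_left_mono[OF le, of s] s by (simp add: algebra_simps)
      then show ?thesis unfolding w by (simp add: mult_exp_exp)
    qed
  qed auto
  also have "\<dots> = exp (s * M) * ((\<Sum>S\<in>Pow {0..m}. ?F S) * (\<Sum>T\<in>Pow {1..m}. ?F T))"
  proof -
    have "(\<Sum>(S, T)\<in>?U. exp (s * M) * (?F S * ?F T)) =
          (\<Sum>S\<in>Pow {0..m}. \<Sum>T\<in>Pow {1..m}. exp (s * M) * (?F S * ?F T))"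
      by (rule sum.cartesian_product[symmetric])
    also have "\<dots> = exp (s * M) * (\<Sum>S\<in>Pow {0..m}. \<Sum>T\<in>Pow {1..m}. ?F S * ?F T)"
      by (simp only: sum_distrib_left)
    finally show ?thesis by (simp only: sum_product)
  qed
  also have "\<dots> = exp (s * M) * ((\<Prod>k\<in>{0..m}. 1 + exp (- s * real k)) *
                                 (\<Prod>k\<in>{1..m}. 1 + exp (- s * real k)))"
    by (simp only: sum_pow_exp finite_atLeastAtMost)
  also have "(\<Prod>k\<in>{0..m}. 1 + exp (- s * real k)) = 2 * (\<Prod>k\<in>{1..m}. 1 + exp (- s * real k))"
  proof -
    have "{0..m} = insert 0 {1..m}" by auto
    then show ?thesis by simp
  qed
  finally show ?thesis by (simp add: power2_eq_square mult.assoc)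
qed

text \<open>At the optimal parameter s = pi / sqrt (6 M) the exponent s M + pi^2/(6 s) is pi sqrt (2M/3).\<close>
lemma saddle_point:
  assumes M: "0 < M"
  defines "s \<equiv> pi / sqrt (6 * M)"
  shows "s * M + pi\<^sup>2 / (6 * s) = pi * sqrt (2 * M / 3)"
proof -
  have "sqrt (2 * M / 3) = sqrt (6 * M / 3\<^sup>2)" by (rule arg_cong[where f = sqrt]) simp
  also have "\<dots> = sqrt (6 * M) / 3" unfolding real_sqrt_divide real_sqrt_abs by simp
  finally have sq: "sqrt (2 * M / 3) = sqrt (6 * M) / 3" .
  have "sqrt (6 * M) * sqrt (6 * M) = 6 * M" using M by simp
  then show ?thesis unfolding s_def sq using M by (simp add: field_simps power2_eq_square)
qed

lemma ln_card_low_area: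
  assumes M: "0 < M"
  shows "ln (real (card (low_area M))) \<le> pi * sqrt (2 * M / 3) + ln 2"
proof -
  define s where "s = pi / sqrt (6 * M)"
  have s: "0 < s" using M by (simp add: s_def)
  define Q where "Q = (\<Prod>k=1..nat \<lfloor>M\<rfloor>. 1 + exp (- s * real k))"
  have Q: "0 < Q" unfolding Q_def by (intro prod_pos) (auto intro: add_pos_pos)
  have "real (card (low_area M)) \<le> real (card (bounded_pairs M (nat \<lfloor>M\<rfloor>)))"
    using low_area_finite_card[of M] by simp
  also have "\<dots> \<le> exp (s * M) * (2 * Q\<^sup>2)" unfolding Q_def by (rule card_bounded_pairs[OF s])
  finally have "ln (real (card (low_area M))) \<le> ln (exp (s * M) * (2 * Q\<^sup>2))"
    using card_low_area_pos[of M] M by (intro ln_mono) auto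
  also have "\<dots> = s * M + ln 2 + 2 * ln Q"
    using Q by (simp add: ln_mult ln_realpow)
  also have "ln Q = (\<Sum>k=1..nat \<lfloor>M\<rfloor>. ln (1 + exp (- s * real k)))"
    unfolding Q_def
    by (rule ln_prod) (auto simp: add_pos_pos[THEN less_imp_neq, symmetric] intro: add_pos_pos)
  also have "\<dots> \<le> pi\<^sup>2 / (12 * s)" by (rule sum_ln_1p_exp[OF s])
  finally have "ln (real (card (low_area M))) \<le> s * M + pi\<^sup>2 / (6 * s) + ln 2" by simp
  then show ?thesis using saddle_point[OF M] by (simp add: s_def)
qed

section \<open>The typical sets\<close>

text \<open>Area threshold: the mean t/2 plus a margin t^(4/5) much larger than the fluctuations.\<close>
definition threshold :: "real \<Rightarrow> real" where
  "threshold t = t / 2 + t powr (4/5)"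

definition pad_size :: "real \<Rightarrow> nat" where
  "pad_size t = nat \<lceil>exp (pi * sqrt (t / 3))\<rceil>"

text \<open>Extra configurations of large area, added only to make the set large enough.\<close>
definition padding :: "real \<Rightarrow> config set" where
  "padding t = (SOME B. finite B \<and> card B = pad_size t \<and> B \<subseteq> U0 - low_area (threshold t))"

definition typical :: "real \<Rightarrow> config set" where
  "typical t = low_area (threshold t) \<union> padding t"

text \<open>U0 is infinite (one particle and one hole suffice), so padding is always possible.\<close>
lemma U0_infinite: "infinite U0"
proof -
  define single :: "nat \<Rightarrow> config" where "single k = (\<lambda>x. x < -1 \<or> x = int k)" for k
  have "single k \<in> U0" for k
  proof -
    have "occ_right (single k) = {int k}" "holes_left (single k) = {-1}"
      by (auto simp: occ_right_def holes_left_def single_def)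
    then show ?thesis by (simp add: U0_iff)
  qed
  moreover have "inj single"
  proof (rule injI)
    fix k j assume "single k = single j"
    then have "single j (int k)" by (metis single_def)
    then show "k = j" by (simp add: single_def)
  qed
  ultimately show ?thesis
    using range_inj_infinite infinite_super by (metis image_subset_iff)
qed

lemma padding_props:
  "finite (padding t) \<and> card (padding t) = pad_size t \<and> padding t \<subseteq> U0 - low_area (threshold t)"
proof -
  have "infinite (U0 - low_area (threshold t))"
    using U0_infinite low_area_finite_card[of "threshold t"] Diff_infinite_finite by blast
  then have "\<exists>B. finite B \<and> card B = pad_size t \<and> B \<subseteq> U0 - low_area (threshold t)"
    by (rule infinite_arbitrarily_large)
  then show ?thesis unfolding padding_def by (rule someI_ex)
qed

lemma typical_basic:
  "typical t \<subseteq> U0 \<and> finite (typical t) \<and>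
   card (typical t) = card (low_area (threshold t)) + pad_size t"
proof -
  have "low_area (threshold t) \<subseteq> U0" by (auto simp: low_area_def)
  moreover have "low_area (threshold t) \<inter> padding t = {}" "padding t \<subseteq> U0"
    using padding_props by blast+
  ultimately show ?thesis
    unfolding typical_def using padding_props[of t] low_area_finite_card[of "threshold t"]
    by (simp add: card_Un_disjoint)
qed

text \<open>Chebyshev with c = t/2, d = t^(4/5) and a = sqrt t, after letting the truncation go to infinity.\<close>
lemma prob_typical_lower:
  assumes t: "1 \<le> t"
  shows "1 - (3/2 * sqrt t + 1) * t / (t powr (4/5))\<^sup>2 \<le> prob_in (1/2) t (typical t)"
proof -
  define c where "c = t / 2"
  define d where "d = t powr (4/5)"
  define a where "a = sqrt t"
  have pos: "0 \<le> t" "0 \<le> c" "0 < d" "0 < a" using t by (auto simp: c_def d_def a_def)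
  have sub: "{\<eta>\<in>U0. areaR \<eta> \<le> c + d} \<subseteq> typical t"
    by (auto simp: typical_def low_area_def threshold_def c_def d_def)
  have fin: "finite (typical t)" using typical_basic by blast
  define bound where "bound N = 1 - mass_defect (Suc N) t
    - (c\<^sup>2 + t\<^sup>2 / 4 + (- c + c * mass_defect N t + t / (2 * a) + a + 1) * t) / d\<^sup>2" for N
  have le: "bound N \<le> prob_in (1/2) t (typical t)" for N
    unfolding bound_def by (rule prob_in_ge[OF pos(1) fin sub pos(3) pos(2) pos(4)])
  have defect: "(\<lambda>N. mass_defect N t) \<longlonglongrightarrow> 0" using mass_defect_zero pos(1) by blast
  have "bound \<longlonglongrightarrow> 1 - 0 - (c\<^sup>2 + t\<^sup>2 / 4 + (- c + c * 0 + t / (2 * a) + a + 1) * t) / d\<^sup>2"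
    unfolding bound_def using pos(3) by (intro tendsto_intros defect LIMSEQ_Suc[OF defect]) simp
  then have "1 - (c\<^sup>2 + t\<^sup>2 / 4 + (- c + t / (2 * a) + a + 1) * t) / d\<^sup>2 \<le> prob_in (1/2) t (typical t)"
    using le by (intro LIMSEQ_le_const2) auto
  moreover have "c\<^sup>2 + t\<^sup>2 / 4 + (- c + t / (2 * a) + a + 1) * t = (3/2 * sqrt t + 1) * t"
  proof -
    have "sqrt t * sqrt t = t" using pos by simp
    then have half: "t / (2 * sqrt t) = sqrt t / 2" using t by (simp add: field_simps)
    show ?thesis unfolding a_def c_def half by (simp add: power2_eq_square algebra_simps)
  qed
  ultimately show ?thesis by (simp add: d_def)
qed

text \<open>The padding gives the lower bound, the counting bound of Hardy-Ramanujan type the upper one.\<close>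
lemma ln_card_typical:
  assumes t: "1 \<le> t"
  shows "pi * sqrt (t / 3) \<le> ln (real (card (typical t)))"
    and "ln (real (card (typical t))) \<le> ln 4 + pi * sqrt ((t + 2 * t powr (4/5)) / 3)"
proof -
  define F where "F = pi * sqrt (2 * threshold t / 3)"
  have M: "0 < threshold t" using t by (simp add: threshold_def add_pos_nonneg)
  have card: "card (typical t) = card (low_area (threshold t)) + pad_size t"
    using typical_basic by blast
  have pad: "exp (pi * sqrt (t / 3)) \<le> real (pad_size t)"
            "real (pad_size t) \<le> exp (pi * sqrt (t / 3)) + 1"
    unfolding pad_size_def by (simp_all add: of_nat_nat[OF less_imp_le] ceiling_correct)
  have "exp (pi * sqrt (t / 3)) \<le> real (card (typical t))" using pad(1) card by simp
  then show "pi * sqrt (t / 3) \<le> ln (real (card (typical t)))"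
    using ln_mono[of "exp (pi * sqrt (t / 3))"] by simp
  have "ln (real (card (low_area (threshold t)))) \<le> F + ln 2"
    unfolding F_def by (rule ln_card_low_area[OF M])
  then have low: "real (card (low_area (threshold t))) \<le> 2 * exp F"
  proof -
    assume ln_le: "ln (real (card (low_area (threshold t)))) \<le> F + ln 2"
    have "real (card (low_area (threshold t))) = exp (ln (real (card (low_area (threshold t)))))"
      using card_low_area_pos[of "threshold t"] M by simp
    also have "\<dots> \<le> exp (F + ln 2)" using ln_le by simp
    finally show ?thesis by (simp add: exp_add)
  qed
  have "pi * sqrt (t / 3) \<le> F"
    unfolding F_def threshold_def by (simp add: divide_right_mono)
  then have "exp (pi * sqrt (t / 3)) \<le> exp F" by simp
  moreover have "1 \<le> exp F" unfolding F_def using M by simp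
  ultimately have "real (pad_size t) \<le> 2 * exp F" using pad(2) by linarith
  then have "real (card (typical t)) \<le> 4 * exp F" using low card by simp
  then have "ln (real (card (typical t))) \<le> ln (4 * exp F)"
    using card card_low_area_pos[of "threshold t"] M by (intro ln_mono) auto
  also have "\<dots> = ln 4 + F" by (simp add: ln_mult)
  finally show "ln (real (card (typical t))) \<le> ln 4 + pi * sqrt ((t + 2 * t powr (4/5)) / 3)"
    by (simp add: F_def threshold_def algebra_simps)
qed

lemma pi_over_sqrt3: "pi * (1/3) powr (1/2) = pi / sqrt 3"
  by (simp add: powr_half_sqrt real_sqrt_divide)

theorem lemma3p3:
  shows "\<exists>X :: real \<Rightarrow> config set.
     (\<forall>t>0. X t \<subseteq> U0 \<and> finite (X t)) \<and>
     ((\<lambda>t. prob_in (1/2) t (X t)) \<longlongrightarrow> 1) at_top \<and>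
     ((\<lambda>t. ln (real (card (X t))) / sqrt t) \<longlongrightarrow> pi / sqrt 3) at_top"
proof (intro exI conjI allI impI)
  show "typical t \<subseteq> U0" "finite (typical t)" for t using typical_basic by blast+
  have lower: "((\<lambda>t::real. 1 - (3/2 * sqrt t + 1) * t / (t powr (4/5))\<^sup>2) \<longlongrightarrow> 1) at_top"
    by real_asymp
  show "((\<lambda>t. prob_in (1/2) t (typical t)) \<longlongrightarrow> 1) at_top"
  proof (rule tendsto_sandwich[OF _ _ lower tendsto_const])
    show "\<forall>\<^sub>F t in at_top. 1 - (3/2 * sqrt t + 1) * t / (t powr (4/5))\<^sup>2 \<le> prob_in (1/2) t (typical t)"
      using prob_typical_lower by (intro eventually_at_top_linorderI[of 1]) auto
    show "\<forall>\<^sub>F t in at_top. prob_in (1/2) t (typical t) \<le> 1"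
      using prob_in_le1 typical_basic by (intro eventually_at_top_linorderI[of 0]) auto
  qed
  have lo: "((\<lambda>t::real. pi * sqrt (t / 3) / sqrt t) \<longlongrightarrow> pi / sqrt 3) at_top"
    unfolding pi_over_sqrt3[symmetric] by real_asymp
  have hi: "((\<lambda>t::real. (ln 4 + pi * sqrt ((t + 2 * t powr (4/5)) / 3)) / sqrt t) \<longlongrightarrow> pi / sqrt 3) at_top"
    unfolding pi_over_sqrt3[symmetric] by real_asymp
  show "((\<lambda>t. ln (real (card (typical t))) / sqrt t) \<longlongrightarrow> pi / sqrt 3) at_top"
  proof (rule tendsto_sandwich[OF _ _ lo hi])
    show "\<forall>\<^sub>F t in at_top. pi * sqrt (t / 3) / sqrt t \<le> ln (real (card (typical t))) / sqrt t"
      by (intro eventually_at_top_linorderI[of 1] divide_right_mono ln_card_typical(1)) auto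
    show "\<forall>\<^sub>F t in at_top. ln (real (card (typical t))) / sqrt t \<le>
            (ln 4 + pi * sqrt ((t + 2 * t powr (4/5)) / 3)) / sqrt t"
      by (intro eventually_at_top_linorderI[of 1] divide_right_mono ln_card_typical(2)) auto
  qed
qed

end
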